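(* Every countable group $G$ admits a free action on $L_1[0,1]$ by lattice (positive) linear isometries for which there exists an equivalent $G$-invariant strictly convex norm on $L_1[0,1]$.
   Context: $\lambda$ is Lebesgue measure on $[0,1]$. Every lattice linear isometry of $L_1[0,1]$ is of the form $T_\phi(f)(x)=\frac{d\phi_*\lambda}{d\lambda}(x)\,f(\phi^{-1}(x))$ for a unique (mod null sets) measurable bijection $\phi$ of $[0,1]$ preserving the measure class of $\lambda$, so an action of $G$ by lattice isometries induces an action of $G$ on $[0,1]$ by such bijections; the action is called free if this induced action is (essentially) free, i.e. for each $g\neq 1_G$ the set of points fixed by $g$ is null. A norm is $G$-invariant if each $g$ acts isometrically for it; strictly convex if for $f\neq h$ of equal norm, $\|\frac{f+h}{2}\|<\|f\|$. *)

theory Defs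
  imports "HOL-Probability.Probability" "HOL-Algebra.Group"
begin

text \<open>Lebesgue measure on [0,1]; L_1[0,1] is represented by the integrable real functions,
  with all notions taken modulo equality almost everywhere.\<close>

abbreviation lam :: "real measure" where
  "lam \<equiv> lebesgue_on {0..1}"

definition L1 :: "(real \<Rightarrow> real) set" where
  "L1 = {f. integrable lam f}"

definition l1norm :: "(real \<Rightarrow> real) \<Rightarrow> real" where
  "l1norm f = (LINT x|lam. \<bar>f x\<bar>)"

definition aeq :: "(real \<Rightarrow> real) \<Rightarrow> (real \<Rightarrow> real) \<Rightarrow> bool" where
  "aeq f g \<longleftrightarrow> (AE x in lam. f x = g x)"

definition lattice_isometry :: "((real \<Rightarrow> real) \<Rightarrow> (real \<Rightarrow> real)) \<Rightarrow> bool" where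
  "lattice_isometry T \<longleftrightarrow>
     (\<forall>f\<in>L1. T f \<in> L1) \<and>
     (\<forall>f\<in>L1. \<forall>h\<in>L1. aeq f h \<longrightarrow> aeq (T f) (T h)) \<and>
     (\<forall>f\<in>L1. \<forall>h\<in>L1. \<forall>a b::real. aeq (T (\<lambda>x. a * f x + b * h x)) (\<lambda>x. a * T f x + b * T h x)) \<and>
     (\<forall>f\<in>L1. l1norm (T f) = l1norm f) \<and>
     (\<forall>f\<in>L1. aeq (T (\<lambda>x. \<bar>f x\<bar>)) (\<lambda>x. \<bar>T f x\<bar>)) \<and>
     (\<forall>f\<in>L1. \<exists>h\<in>L1. aeq (T h) f)"

definition nonsingular_bij :: "(real \<Rightarrow> real) \<Rightarrow> bool" where
  "nonsingular_bij \<phi> \<longleftrightarrow>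
     bij_betw \<phi> {0..1} {0..1} \<and> \<phi> \<in> lam \<rightarrow>\<^sub>M lam \<and> inv_into {0..1} \<phi> \<in> lam \<rightarrow>\<^sub>M lam \<and>
     absolutely_continuous lam (distr lam lam \<phi>) \<and> absolutely_continuous (distr lam lam \<phi>) lam"

definition Tphi :: "(real \<Rightarrow> real) \<Rightarrow> (real \<Rightarrow> real) \<Rightarrow> (real \<Rightarrow> real)" where
  "Tphi \<phi> f = (\<lambda>x. enn2real (RN_deriv lam (distr lam lam \<phi>) x) * f (inv_into {0..1} \<phi> x))"

definition lattice_isometric_action ::
  "('g, 'b) monoid_scheme \<Rightarrow> ('g \<Rightarrow> (real \<Rightarrow> real) \<Rightarrow> (real \<Rightarrow> real)) \<Rightarrow> bool" where
  "lattice_isometric_action G T \<longleftrightarrow>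
     (\<forall>g\<in>carrier G. lattice_isometry (T g)) \<and>
     (\<forall>f\<in>L1. aeq (T \<one>\<^bsub>G\<^esub> f) f) \<and>
     (\<forall>g\<in>carrier G. \<forall>h\<in>carrier G. \<forall>f\<in>L1. aeq (T (g \<otimes>\<^bsub>G\<^esub> h) f) (T g (T h f)))"

definition free_action ::
  "('g, 'b) monoid_scheme \<Rightarrow> ('g \<Rightarrow> (real \<Rightarrow> real) \<Rightarrow> (real \<Rightarrow> real)) \<Rightarrow> bool" where
  "free_action G T \<longleftrightarrow>
     (\<exists>\<phi>::'g \<Rightarrow> real \<Rightarrow> real.
        (\<forall>g\<in>carrier G. nonsingular_bij (\<phi> g) \<and> (\<forall>f\<in>L1. aeq (T g f) (Tphi (\<phi> g) f))) \<and>
        (\<forall>g\<in>carrier G. g \<noteq> \<one>\<^bsub>G\<^esub> \<longrightarrow> (AE x in lam. \<phi> g x \<noteq> x)))"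

definition equiv_norm :: "((real \<Rightarrow> real) \<Rightarrow> real) \<Rightarrow> bool" where
  "equiv_norm N \<longleftrightarrow>
     (\<forall>f\<in>L1. \<forall>h\<in>L1. aeq f h \<longrightarrow> N f = N h) \<and>
     (\<forall>f\<in>L1. 0 \<le> N f) \<and>
     (\<forall>f\<in>L1. N f = 0 \<longleftrightarrow> aeq f (\<lambda>_. 0)) \<and>
     (\<forall>f\<in>L1. \<forall>c::real. N (\<lambda>x. c * f x) = \<bar>c\<bar> * N f) \<and>
     (\<forall>f\<in>L1. \<forall>h\<in>L1. N (\<lambda>x. f x + h x) \<le> N f + N h) \<and>
     (\<exists>a b::real. 0 < a \<and> 0 < b \<and> (\<forall>f\<in>L1. a * l1norm f \<le> N f \<and> N f \<le> b * l1norm f))"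

definition strictly_convex_norm :: "((real \<Rightarrow> real) \<Rightarrow> real) \<Rightarrow> bool" where
  "strictly_convex_norm N \<longleftrightarrow>
     (\<forall>f\<in>L1. \<forall>h\<in>L1. \<not> aeq f h \<and> N f = N h \<longrightarrow> N (\<lambda>x. (f x + h x) / 2) < N f)"

definition invariant_norm ::
  "('g, 'b) monoid_scheme \<Rightarrow> ('g \<Rightarrow> (real \<Rightarrow> real) \<Rightarrow> (real \<Rightarrow> real)) \<Rightarrow> ((real \<Rightarrow> real) \<Rightarrow> real) \<Rightarrow> bool" where
  "invariant_norm G T N \<longleftrightarrow> (\<forall>g\<in>carrier G. \<forall>f\<in>L1. N (T g f) = N f)"

end

theory Submission
  imports Defs
begin

text \<open>
  Split [0,1) into the dyadic blocks B_n = [1 - 2^-n, 1 - 2^-(n+1)) and index the blocks by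
  G \<times> \<nat>. Left translation of the first coordinate by g \<noteq> 1 permutes the blocks without
  fixed points; moving each block affinely onto its image gives nonsingular, essentially free
  point maps of [0,1], whose weighted composition operators form a free action by lattice
  isometries.

  For the norm, let f_n be f transported from B_n to [0,1] with the same L_1 mass, and add to
  ||f||_1 the sum over all pairs of blocks of w(n,m) times the L_1 norm on [0,1]^2 of
  (t,s) \<mapsto> ||(f_n t, f_m s)||, the Euclidean norm in the plane. The weight w(n,m) is
  2^-k with k a code of the orbit of (n,m) under the diagonal action of G; it is invariant,
  and as each orbit meets each row and each column at most once, its row and column sums are at
  most 2. So the new norm is invariant and lies between ||f||_1 and 5 ||f||_1. Equality in its
  triangle inequality forces, for all n, m and almost all t, s, equality in the triangle
  inequality of the plane, that is f_n(t) h_m(s) = f_m(s) h_n(t); hence h is a scalar multiple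
  of f, which gives strict convexity.
\<close>

lemma lebesgue_measurable_affine:
  fixes c t :: real assumes "c \<noteq> 0"
  shows "(\<lambda>x. t + c * x) \<in> lebesgue \<rightarrow>\<^sub>M lebesgue"
  using lebesgue_affine_measurable[where c="\<lambda>_. c" and t=t] assms by simp

lemma affine_image_eq_vimage:
  fixes c t :: real assumes "c \<noteq> 0"
  shows "(\<lambda>x. t + c * x) ` A = (\<lambda>y. - t / c + (1 / c) * y) -` A"
proof
  show "(\<lambda>y. - t / c + (1 / c) * y) -` A \<subseteq> (\<lambda>x. t + c * x) ` A"
  proof
    fix z assume "z \<in> (\<lambda>y. - t / c + (1 / c) * y) -` A"
    moreover have "z = t + c * (- t / c + (1 / c) * z)" using assms by (simp add: field_simps)
    ultimately show "z \<in> (\<lambda>x. t + c * x) ` A" by (metis image_eqI vimageD)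
  qed
qed (use assms in \<open>auto simp: field_simps\<close>)

lemma affine_image_sets_lebesgue:
  fixes c t :: real assumes "c \<noteq> 0" "A \<in> sets lebesgue"
  shows "(\<lambda>x. t + c * x) ` A \<in> sets lebesgue"
  using measurable_sets[OF lebesgue_measurable_affine[of "1 / c" "- t / c"] assms(2)] assms(1)
  by (simp add: affine_image_eq_vimage)

lemma affine_image_null_sets_lebesgue:
  fixes c t :: real assumes "c \<noteq> 0" "A \<in> null_sets lebesgue"
  shows "(\<lambda>x. t + c * x) ` A \<in> null_sets lebesgue"
proof -
  have "(\<lambda>x. t + c * x) ` A = (\<lambda>x. c *\<^sub>R x + t) ` A" by (simp add: add.commute)
  then have "emeasure lebesgue ((\<lambda>x. t + c * x) ` A) = 0"
    using emeasure_lebesgue_affine[of c t A] null_setsD1[OF assms(2)] by simp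
  then show ?thesis using affine_image_sets_lebesgue[OF assms(1) null_setsD2[OF assms(2)]] by auto
qed

lemma affine_vimage_null_sets_lebesgue:
  fixes c t :: real assumes "c \<noteq> 0" "A \<in> null_sets lebesgue"
  shows "(\<lambda>x. t + c * x) -` A \<in> null_sets lebesgue"
proof -
  have inv: "(\<lambda>y. - (- t / c) / (1 / c) + 1 / (1 / c) * y) = (\<lambda>y. t + c * y)"
    using assms by (simp add: fun_eq_iff)
  have "(\<lambda>x. - t / c + 1 / c * x) ` A = (\<lambda>y. t + c * y) -` A"
    using affine_image_eq_vimage[of "1 / c" "- t / c" A, unfolded inv] assms by simp
  then show ?thesis using affine_image_null_sets_lebesgue[of "1 / c" A "- t / c"] assms by simp
qed

lemma
  fixes c t :: real and h :: "real \<Rightarrow> real"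
  assumes "c \<noteq> 0" and h[measurable]: "h \<in> borel_measurable lebesgue"
  shows integrable_lebesgue_affine_iff:
      "integrable lebesgue h \<longleftrightarrow> integrable lebesgue (\<lambda>x. h (t + c * x))"
    and integral_lebesgue_affine:
      "integral\<^sup>L lebesgue h = \<bar>c\<bar> * integral\<^sup>L lebesgue (\<lambda>x. h (t + c * x))"
proof -
  note L = lebesgue_real_affine[OF assms(1), of t]
  note M[measurable] = lebesgue_measurable_affine[OF assms(1), of t]
  have "integrable lebesgue h \<longleftrightarrow>
      integrable (density (distr lebesgue lebesgue (\<lambda>x. t + c * x)) (\<lambda>_. ennreal \<bar>c\<bar>)) h"
    by (rule arg_cong[where f="\<lambda>M. integrable M h", OF L])
  also have "\<dots> \<longleftrightarrow> integrable (distr lebesgue lebesgue (\<lambda>x. t + c * x)) (\<lambda>x. \<bar>c\<bar> *\<^sub>R h x)"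
    by (subst integrable_density) auto
  also have "\<dots> \<longleftrightarrow> integrable (distr lebesgue lebesgue (\<lambda>x. t + c * x)) h"
    unfolding real_scaleR_def integrable_mult_left_iff using assms(1) by simp
  also have "\<dots> \<longleftrightarrow> integrable lebesgue (\<lambda>x. h (t + c * x))"
    by (subst integrable_distr_eq) auto
  finally show "integrable lebesgue h \<longleftrightarrow> integrable lebesgue (\<lambda>x. h (t + c * x))" .
  have "integral\<^sup>L lebesgue h =
      integral\<^sup>L (density (distr lebesgue lebesgue (\<lambda>x. t + c * x)) (\<lambda>_. ennreal \<bar>c\<bar>)) h"
    by (rule arg_cong[where f="\<lambda>M. integral\<^sup>L M h", OF L])
  also have "\<dots> = integral\<^sup>L (distr lebesgue lebesgue (\<lambda>x. t + c * x)) (\<lambda>x. \<bar>c\<bar> *\<^sub>R h x)"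
    by (subst integral_density) auto
  also have "\<dots> = \<bar>c\<bar> * integral\<^sup>L lebesgue (\<lambda>x. h (t + c * x))"
    by (subst integral_distr) auto
  finally show "integral\<^sup>L lebesgue h = \<bar>c\<bar> * integral\<^sup>L lebesgue (\<lambda>x. h (t + c * x))" .
qed

section \<open>Dyadic blocks of the unit interval\<close>

definition block_start :: "nat \<Rightarrow> real" where
  "block_start n = 1 - (1/2)^n"

definition block_len :: "nat \<Rightarrow> real" where
  "block_len n = (1/2)^Suc n"

definition block :: "nat \<Rightarrow> real set" where
  "block n = {block_start n..<block_start (Suc n)}"

definition block_emb :: "nat \<Rightarrow> real \<Rightarrow> real" where
  "block_emb n t = block_start n + block_len n * t"

definition block_index :: "real \<Rightarrow> nat" where
  "block_index x = (LEAST n. x < block_start (Suc n))"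

definition block_pos :: "real \<Rightarrow> real" where
  "block_pos x = (x - block_start (block_index x)) / block_len (block_index x)"

lemma block_len_pos: "0 < block_len n"
  by (simp add: block_len_def)

lemma block_len_nonzero [simp]: "block_len n \<noteq> 0"
  using block_len_pos[of n] by simp

lemma block_start_Suc: "block_start (Suc n) = block_start n + block_len n"
  by (simp add: block_start_def block_len_def)

lemma block_start_nonneg: "0 \<le> block_start n"
  by (simp add: block_start_def power_le_one)

lemma block_start_less_1: "block_start n < 1"
  by (simp add: block_start_def)

lemma block_start_mono: "m \<le> n \<Longrightarrow> block_start m \<le> block_start n"
  by (simp add: block_start_def power_decreasing)

lemma block_subset: "block n \<subseteq> {0..<1}"
  using block_start_nonneg[of n] block_start_less_1[of "Suc n"] by (auto simp: block_def)

lemma in_block_index: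
  assumes "0 \<le> x" "x < 1"
  shows "x \<in> block (block_index x)"
proof -
  obtain n where "(1/2::real)^n < 1 - x"
    using real_arch_pow_inv[of "1 - x" "1/2"] assms(2) by auto
  moreover have "(1/2::real)^(Suc n) \<le> (1/2)^n" by (rule power_decreasing) auto
  ultimately have "x < block_start (Suc n)" unfolding block_start_def by linarith
  then have upper: "x < block_start (Suc (block_index x))"
    unfolding block_index_def by (rule LeastI)
  have "block_start (block_index x) \<le> x"
  proof (cases "block_index x")
    case 0 then show ?thesis using assms by (simp add: block_start_def)
  next
    case (Suc m)
    then have "\<not> x < block_start (Suc m)"
      using not_less_Least[of m "\<lambda>n. x < block_start (Suc n)"] by (simp add: block_index_def)
    then show ?thesis using Suc by simp
  qed
  then show ?thesis using upper by (simp add: block_def)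
qed

lemma block_index_eq:
  assumes "x \<in> block n"
  shows "block_index x = n"
proof -
  have x: "block_start n \<le> x" "x < block_start (Suc n)" using assms by (auto simp: block_def)
  have "x \<in> {0..<1}" using block_subset assms by blast
  then have "0 \<le> x" "x < 1" by auto
  then have "x < block_start (Suc (block_index x))" using in_block_index by (simp add: block_def)
  then have "\<not> block_index x < n" using x(1) block_start_mono[of "Suc (block_index x)" n] by auto
  moreover have "block_index x \<le> n" unfolding block_index_def using x(2) by (rule Least_le)
  ultimately show ?thesis by simp
qed

lemma block_emb_in_block: "0 \<le> t \<Longrightarrow> t < 1 \<Longrightarrow> block_emb n t \<in> block n"
  using block_len_pos[of n] by (simp add: block_def block_emb_def block_start_Suc)

lemma block_emb_image: "block_emb n ` {0..<1} = block n"
proof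
  show "block n \<subseteq> block_emb n ` {0..<1}"
  proof
    fix x assume x: "x \<in> block n"
    define t where "t = (x - block_start n) / block_len n"
    have "block_emb n t = x" by (simp add: t_def block_emb_def)
    moreover have "t \<in> {0..<1}"
      using x block_len_pos[of n] by (auto simp: t_def block_def block_start_Suc field_simps)
    ultimately show "x \<in> block_emb n ` {0..<1}" by (metis image_eqI)
  qed
qed (auto intro: block_emb_in_block)

lemma block_emb_unit:
  assumes "t \<in> {0..1}"
  shows "block_emb n t \<in> {0..1}"
proof -
  have "block_len n * t \<le> block_len n" "0 \<le> block_len n * t"
    using assms block_len_pos[of n] by (auto intro: mult_left_le)
  then have "0 \<le> block_start n + block_len n * t" "block_start n + block_len n * t \<le> 1"
    using block_start_nonneg[of n] block_start_less_1[of "Suc n"] block_start_Suc[of n] by linarith+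
  then show ?thesis by (simp add: block_emb_def)
qed

lemma block_emb_inj: "block_emb n x = block_emb n y \<longleftrightarrow> x = y"
  using block_len_pos[of n] by (auto simp: block_emb_def)

lemma block_index_emb: "0 \<le> t \<Longrightarrow> t < 1 \<Longrightarrow> block_index (block_emb n t) = n"
  by (intro block_index_eq block_emb_in_block)

lemma block_pos_emb: "0 \<le> t \<Longrightarrow> t < 1 \<Longrightarrow> block_pos (block_emb n t) = t"
  using block_index_emb[of t n] block_len_pos[of n] by (simp add: block_pos_def block_emb_def)

lemma block_emb_index_pos: "block_emb (block_index x) (block_pos x) = x"
  using block_len_pos[of "block_index x"] by (simp add: block_pos_def block_emb_def)

lemma block_pos_bounds:
  assumes "0 \<le> x" "x < 1"
  shows "0 \<le> block_pos x" "block_pos x < 1"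
  using in_block_index[OF assms] block_len_pos[of "block_index x"]
  by (auto simp: block_pos_def block_def block_start_Suc field_simps)

lemma sets_lam_iff: "A \<in> sets lam \<longleftrightarrow> A \<subseteq> {0..1} \<and> A \<in> sets lebesgue"
  by (rule sets_restrict_space_iff) simp

lemma null_sets_lam_iff: "A \<in> null_sets lam \<longleftrightarrow> A \<subseteq> {0..1} \<and> A \<in> null_sets lebesgue"
  by (rule null_sets_restrict_space) simp

lemma finite_measure_lam: "finite_measure lam"
  by (rule finite_measure_lebesgue_on) simp

lemma AE_lam_neq_1: "AE x in lam. x \<noteq> 1"
  by (rule AE_I'[of "{1}"]) (auto simp: null_sets_lam_iff)

lemma measurable_block_emb [measurable]: "block_emb n \<in> lam \<rightarrow>\<^sub>M lam"
proof -
  have "block_emb n \<in> lebesgue \<rightarrow>\<^sub>M lebesgue"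
    unfolding block_emb_def[abs_def] using block_len_pos[of n] by (intro lebesgue_measurable_affine) simp
  then show ?thesis by (rule measurable_restrict_space3) (use block_emb_unit in auto)
qed

lemma block_emb_vimage_null_sets:
  assumes "N \<in> null_sets lam"
  shows "block_emb n -` N \<inter> {0..1} \<in> null_sets lam"
proof -
  have "block_emb n -` N \<in> null_sets lebesgue"
    unfolding block_emb_def[abs_def] using block_len_pos[of n] assms
    by (intro affine_vimage_null_sets_lebesgue) (auto simp: null_sets_lam_iff)
  then show ?thesis by (simp add: null_sets_lam_iff null_set_Int2)
qed

lemma block_emb_image_sets: "A \<in> sets lam \<Longrightarrow> block_emb n ` A \<in> sets lam"
  using block_len_pos[of n] block_emb_unit
  by (auto simp: sets_lam_iff block_emb_def[abs_def] intro: affine_image_sets_lebesgue)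

lemma AE_block_emb:
  assumes "AE x in lam. P x"
  shows "AE t in lam. P (block_emb n t)"
proof -
  from assms obtain N where N: "{x \<in> space lam. \<not> P x} \<subseteq> N" "N \<in> null_sets lam"
    by (metis AE_E null_setsI)
  have "{t \<in> space lam. \<not> P (block_emb n t)} \<subseteq> block_emb n -` N \<inter> {0..1}"
    using N(1) block_emb_unit by auto
  then show ?thesis by (rule AE_I'[OF block_emb_vimage_null_sets[OF N(2)]])
qed

lemma AE_block_emb_imp_AE_block:
  assumes "AE t in lam. P (block_emb n t)"
  shows "AE x in lam. x \<in> block n \<longrightarrow> P x"
proof -
  from assms obtain N where N: "{t \<in> space lam. \<not> P (block_emb n t)} \<subseteq> N" "N \<in> null_sets lam"
    by (metis AE_E null_setsI)
  have "block_emb n ` N \<in> null_sets lebesgue"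
    unfolding block_emb_def[abs_def] using block_len_pos[of n] N(2)
    by (intro affine_image_null_sets_lebesgue) (auto simp: null_sets_lam_iff)
  then have "block_emb n ` N \<inter> {0..1} \<in> null_sets lam"
    by (simp add: null_sets_lam_iff null_set_Int2)
  moreover have "{x \<in> space lam. \<not> (x \<in> block n \<longrightarrow> P x)} \<subseteq> block_emb n ` N \<inter> {0..1}"
  proof
    fix x assume x: "x \<in> {x \<in> space lam. \<not> (x \<in> block n \<longrightarrow> P x)}"
    then have "x \<in> block_emb n ` {0..<1}" using block_emb_image[of n] by simp
    then obtain t where t: "t \<in> {0..<1}" "x = block_emb n t" by blast
    then have "t \<in> N" using N(1) x by auto
    then show "x \<in> block_emb n ` N \<inter> {0..1}" using t x by auto
  qed
  ultimately show ?thesis by (rule AE_I')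
qed

lemma AE_lam_blocks:
  assumes "\<And>n. AE t in lam. P (block_emb n t)"
  shows "AE x in lam. P x"
proof -
  have "AE x in lam. \<forall>n. x \<in> block n \<longrightarrow> P x"
    by (rule AE_all_countable[THEN iffD2]) (use AE_block_emb_imp_AE_block[OF assms] in blast)
  then show ?thesis using AE_lam_neq_1 AE_space
  proof eventually_elim
    case (elim x)
    then have "0 \<le> x" "x < 1" by auto
    then show ?case using elim(1) in_block_index by blast
  qed
qed

lemma
  fixes g :: "real \<Rightarrow> real"
  assumes g[measurable]: "g \<in> borel_measurable lam" and A[measurable]: "A \<in> sets lam"
  shows integrable_block_emb_iff:
      "integrable lam (\<lambda>t. indicator A t * (block_len n * g (block_emb n t))) \<longleftrightarrow>
       integrable lam (\<lambda>x. indicator (block_emb n ` A) x * g x)"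
    and integral_block_emb:
      "(\<integral>t. indicator A t * (block_len n * g (block_emb n t)) \<partial>lam) =
       (\<integral>x. indicator (block_emb n ` A) x * g x \<partial>lam)"
proof -
  have A01: "A \<subseteq> {0..1}" using A by (simp add: sets_lam_iff)
  have EA[measurable]: "block_emb n ` A \<in> sets lam" using A by (rule block_emb_image_sets)
  have EA01: "block_emb n ` A \<subseteq> {0..1}" using EA by (simp add: sets_lam_iff)
  define h where "h x = (if x \<in> {0..1} then indicator (block_emb n ` A) x * g x else 0)" for x
  have "(\<lambda>x. indicator (block_emb n ` A) x * g x) \<in> borel_measurable lam" by measurable
  then have hm: "h \<in> borel_measurable lebesgue"
    unfolding h_def[abs_def] by (rule borel_measurable_if_I) simp
  have h_emb: "h (block_start n + block_len n * t) = indicator A t * g (block_emb n t)" for t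
    using A01 EA01 by (auto simp: h_def block_emb_def[symmetric] indicator_def block_emb_inj)
  have restrict: "(\<lambda>t. if t \<in> {0..1} then indicator A t * (block_len n * g (block_emb n t)) else 0) =
      (\<lambda>t. block_len n * (indicator A t * g (block_emb n t)))"
    using A01 by (force simp: fun_eq_iff indicator_def)
  have L: "block_len n \<noteq> 0" "\<bar>block_len n\<bar> = block_len n" using block_len_pos[of n] by auto
  have "integrable lam (\<lambda>x. indicator (block_emb n ` A) x * g x) \<longleftrightarrow> integrable lebesgue h"
    unfolding h_def[abs_def] by (rule Lebesgue_Measure.integrable_restrict_UNIV[symmetric]) simp
  also have "\<dots> \<longleftrightarrow> integrable lebesgue (\<lambda>t. block_len n * (indicator A t * g (block_emb n t)))"
    using integrable_lebesgue_affine_iff[OF L(1) hm, of "block_start n"] L by (simp add: h_emb)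
  also have "\<dots> \<longleftrightarrow> integrable lam (\<lambda>t. indicator A t * (block_len n * g (block_emb n t)))"
    unfolding restrict[symmetric] by (rule Lebesgue_Measure.integrable_restrict_UNIV) simp
  finally show "integrable lam (\<lambda>t. indicator A t * (block_len n * g (block_emb n t))) \<longleftrightarrow>
      integrable lam (\<lambda>x. indicator (block_emb n ` A) x * g x)" by simp
  have "(\<integral>x. indicator (block_emb n ` A) x * g x \<partial>lam) = integral\<^sup>L lebesgue h"
    unfolding h_def[abs_def] by (rule Lebesgue_Measure.integral_restrict_UNIV[symmetric]) simp
  also have "\<dots> = integral\<^sup>L lebesgue (\<lambda>t. block_len n * (indicator A t * g (block_emb n t)))"
    using integral_lebesgue_affine[OF L(1) hm, of "block_start n"] L by (simp add: h_emb)
  also have "\<dots> = (\<integral>t. indicator A t * (block_len n * g (block_emb n t)) \<partial>lam)"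
    unfolding restrict[symmetric] by (rule Lebesgue_Measure.integral_restrict_UNIV) simp
  finally show "(\<integral>t. indicator A t * (block_len n * g (block_emb n t)) \<partial>lam) =
      (\<integral>x. indicator (block_emb n ` A) x * g x \<partial>lam)" by simp
qed

lemma aeq_refl: "aeq f f"
  by (simp add: aeq_def)

lemma aeq_sym: "aeq f g \<Longrightarrow> aeq g f"
  by (auto simp: aeq_def elim: AE_mp)

lemma aeq_trans: "aeq f g \<Longrightarrow> aeq g h \<Longrightarrow> aeq f h"
  unfolding aeq_def by (auto elim: AE_mp)

lemma l1norm_nonneg: "0 \<le> l1norm f"
  unfolding l1norm_def by (rule Bochner_Integration.integral_nonneg) auto

lemma L1_scale: "f \<in> L1 \<Longrightarrow> (\<lambda>x. c * f x) \<in> L1"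
  by (simp add: L1_def)

lemma L1_add: "f \<in> L1 \<Longrightarrow> h \<in> L1 \<Longrightarrow> (\<lambda>x. f x + h x) \<in> L1"
  by (simp add: L1_def)

lemma l1norm_scale: "l1norm (\<lambda>x. c * f x) = \<bar>c\<bar> * l1norm f"
  by (simp add: l1norm_def abs_mult)

lemma l1norm_add:
  assumes "f \<in> L1" "h \<in> L1"
  shows "l1norm (\<lambda>x. f x + h x) \<le> l1norm f + l1norm h"
proof -
  have "l1norm (\<lambda>x. f x + h x) \<le> (\<integral>x. \<bar>f x\<bar> + \<bar>h x\<bar> \<partial>lam)"
    unfolding l1norm_def using assms by (intro integral_mono) (auto simp: L1_def abs_triangle_ineq)
  also have "\<dots> = l1norm f + l1norm h"
    unfolding l1norm_def using assms by (intro Bochner_Integration.integral_add) (auto simp: L1_def)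
  finally show ?thesis .
qed

lemma l1norm_aeq:
  assumes "f \<in> L1" "h \<in> L1" "aeq f h"
  shows "l1norm f = l1norm h"
  unfolding l1norm_def using assms
  by (intro integral_cong_AE) (auto simp: L1_def aeq_def elim: AE_mp)

lemma l1norm_eq_0_iff:
  assumes "f \<in> L1"
  shows "l1norm f = 0 \<longleftrightarrow> aeq f (\<lambda>_. 0)"
proof -
  have "l1norm f = 0 \<longleftrightarrow> (AE x in lam. \<bar>f x\<bar> = 0)"
    unfolding l1norm_def using assms by (intro integral_nonneg_eq_0_iff_AE) (auto simp: L1_def)
  then show ?thesis by (simp add: aeq_def)
qed

section \<open>Operators induced by nonsingular bijections\<close>

lemma Tphi_linear: "Tphi \<phi> (\<lambda>x. a * f x + b * h x) = (\<lambda>x. a * Tphi \<phi> f x + b * Tphi \<phi> h x)"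
  by (rule ext) (simp add: Tphi_def algebra_simps)

lemma Tphi_abs: "Tphi \<phi> (\<lambda>x. \<bar>f x\<bar>) = (\<lambda>x. \<bar>Tphi \<phi> f x\<bar>)"
  by (rule ext) (simp add: Tphi_def abs_mult)

locale nonsingular_pair =
  fixes \<phi> \<psi> :: "real \<Rightarrow> real"
  assumes measurable_phi: "\<phi> \<in> lam \<rightarrow>\<^sub>M lam"
    and measurable_psi: "\<psi> \<in> lam \<rightarrow>\<^sub>M lam"
    and psi_phi: "x \<in> {0..1} \<Longrightarrow> \<psi> (\<phi> x) = x"
    and phi_psi: "x \<in> {0..1} \<Longrightarrow> \<phi> (\<psi> x) = x"
    and null_vimage_phi: "N \<in> null_sets lam \<Longrightarrow> \<phi> -` N \<inter> {0..1} \<in> null_sets lam"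
    and null_vimage_psi: "N \<in> null_sets lam \<Longrightarrow> \<psi> -` N \<inter> {0..1} \<in> null_sets lam"
begin

declare measurable_phi [measurable] measurable_psi [measurable]

lemma nonsingular_pair_swap: "nonsingular_pair \<psi> \<phi>"
  by unfold_locales (simp_all add: psi_phi phi_psi null_vimage_phi null_vimage_psi)

lemma phi_unit: "x \<in> {0..1} \<Longrightarrow> \<phi> x \<in> {0..1}"
  using measurable_space[OF measurable_phi] by simp

lemma psi_unit: "x \<in> {0..1} \<Longrightarrow> \<psi> x \<in> {0..1}"
  using measurable_space[OF measurable_psi] by simp

lemma inv_into_phi: "x \<in> {0..1} \<Longrightarrow> inv_into {0..1} \<phi> x = \<psi> x"
  using psi_unit phi_psi inj_on_inverseI[of "{0..1}" \<psi> \<phi>] psi_phi by (intro inv_into_f_eq) auto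

lemma absolutely_continuous_distr_phi: "absolutely_continuous lam (distr lam lam \<phi>)"
  unfolding absolutely_continuous_def
proof
  fix N assume N: "N \<in> null_sets lam"
  then have "emeasure (distr lam lam \<phi>) N = 0"
    using null_vimage_phi[OF N] by (subst emeasure_distr) auto
  then show "N \<in> null_sets (distr lam lam \<phi>)" using N by (auto simp: null_sets_def)
qed

lemma nonsingular_bij_phi: "nonsingular_bij \<phi>"
  unfolding nonsingular_bij_def
proof (intro conjI)
  show "bij_betw \<phi> {0..1} {0..1}"
    by (rule bij_betw_byWitness[where f'=\<psi>]) (use psi_phi phi_psi phi_unit psi_unit in auto)
  show "inv_into {0..1} \<phi> \<in> lam \<rightarrow>\<^sub>M lam"
    using measurable_psi by (rule measurable_cong[THEN iffD1, rotated]) (simp add: inv_into_phi)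
  show "absolutely_continuous (distr lam lam \<phi>) lam"
    unfolding absolutely_continuous_def
  proof
    fix N assume N: "N \<in> null_sets (distr lam lam \<phi>)"
    then have N01: "N \<in> sets lam" by (auto simp: null_sets_def)
    then have "\<phi> -` N \<inter> {0..1} \<in> null_sets lam"
      using N measurable_sets[OF measurable_phi N01] by (auto simp: null_sets_def emeasure_distr)
    moreover have "\<psi> -` (\<phi> -` N \<inter> {0..1}) \<inter> {0..1} = N"
      using N01 phi_psi psi_unit by (auto simp: sets_lam_iff)
    ultimately show "N \<in> null_sets lam" using null_vimage_psi by metis
  qed
qed (simp_all add: absolutely_continuous_distr_phi)

definition pushforward_density :: "real \<Rightarrow> real" where
  "pushforward_density x = enn2real (RN_deriv lam (distr lam lam \<phi>) x)"

lemma pushforward_density_nonneg: "0 \<le> pushforward_density x"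
  by (simp add: pushforward_density_def)

lemma measurable_pushforward_density [measurable]: "pushforward_density \<in> borel_measurable lam"
  unfolding pushforward_density_def by measurable

lemma density_pushforward_density:
  "density lam (\<lambda>x. ennreal (pushforward_density x)) = distr lam lam \<phi>"
proof -
  interpret finite_measure lam by (rule finite_measure_lam)
  have "finite_measure (distr lam lam \<phi>)"
    by (rule finite_measure_distr) (rule measurable_phi)
  then have "AE x in lam. RN_deriv lam (distr lam lam \<phi>) x \<noteq> \<infinity>"
    using absolutely_continuous_distr_phi
    by (intro RN_deriv_finite) (auto intro: finite_measure.axioms(1))
  then have "AE x in lam. ennreal (pushforward_density x) = RN_deriv lam (distr lam lam \<phi>) x"
    by eventually_elim (auto simp: pushforward_density_def ennreal_enn2real_if)
  then have "density lam (\<lambda>x. ennreal (pushforward_density x)) =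
      density lam (RN_deriv lam (distr lam lam \<phi>))"
    by (intro density_cong) auto
  also have "\<dots> = distr lam lam \<phi>"
    using absolutely_continuous_distr_phi by (intro density_RN_deriv) auto
  finally show ?thesis .
qed

lemma
  fixes k :: "real \<Rightarrow> real"
  assumes k[measurable]: "k \<in> borel_measurable lam"
  shows integrable_pushforward_density_iff:
      "integrable lam (\<lambda>x. pushforward_density x * k x) \<longleftrightarrow> integrable lam (\<lambda>y. k (\<phi> y))"
    and integral_pushforward_density:
      "(\<integral>x. pushforward_density x * k x \<partial>lam) = (\<integral>y. k (\<phi> y) \<partial>lam)"
proof -
  have "integrable lam (\<lambda>x. pushforward_density x * k x) \<longleftrightarrow>
      integrable (density lam (\<lambda>x. ennreal (pushforward_density x))) k"
    by (subst integrable_density) (auto simp: pushforward_density_nonneg)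
  also have "\<dots> \<longleftrightarrow> integrable lam (\<lambda>y. k (\<phi> y))"
    unfolding density_pushforward_density by (rule integrable_distr_eq) auto
  finally show "integrable lam (\<lambda>x. pushforward_density x * k x) \<longleftrightarrow> integrable lam (\<lambda>y. k (\<phi> y))" .
  have "(\<integral>x. pushforward_density x * k x \<partial>lam) =
      integral\<^sup>L (density lam (\<lambda>x. ennreal (pushforward_density x))) k"
    by (subst integral_density) (auto simp: pushforward_density_nonneg)
  also have "\<dots> = (\<integral>y. k (\<phi> y) \<partial>lam)"
    unfolding density_pushforward_density by (rule integral_distr) auto
  finally show "(\<integral>x. pushforward_density x * k x \<partial>lam) = (\<integral>y. k (\<phi> y) \<partial>lam)" .
qed

lemma Tphi_eq: "x \<in> {0..1} \<Longrightarrow> Tphi \<phi> f x = pushforward_density x * f (\<psi> x)"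
  by (simp add: Tphi_def pushforward_density_def inv_into_phi)

lemma Tphi_L1:
  assumes "f \<in> L1"
  shows "Tphi \<phi> f \<in> L1"
proof -
  have [measurable]: "f \<in> borel_measurable lam" using assms by (simp add: L1_def)
  have "integrable lam (\<lambda>y. f (\<psi> (\<phi> y))) \<longleftrightarrow> integrable lam f"
    by (rule Bochner_Integration.integrable_cong) (auto simp: psi_phi)
  then have "integrable lam (\<lambda>x. pushforward_density x * f (\<psi> x))"
    using assms by (simp add: integrable_pushforward_density_iff L1_def)
  moreover have "integrable lam (\<lambda>x. pushforward_density x * f (\<psi> x)) \<longleftrightarrow> integrable lam (Tphi \<phi> f)"
    by (rule Bochner_Integration.integrable_cong) (auto simp: Tphi_eq)
  ultimately show ?thesis by (simp add: L1_def)
qed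

lemma l1norm_Tphi:
  assumes "f \<in> L1"
  shows "l1norm (Tphi \<phi> f) = l1norm f"
proof -
  have [measurable]: "f \<in> borel_measurable lam" using assms by (simp add: L1_def)
  have "l1norm (Tphi \<phi> f) = (\<integral>x. pushforward_density x * \<bar>f (\<psi> x)\<bar> \<partial>lam)"
    unfolding l1norm_def using pushforward_density_nonneg
    by (intro Bochner_Integration.integral_cong) (auto simp: Tphi_eq abs_mult)
  also have "\<dots> = (\<integral>y. \<bar>f (\<psi> (\<phi> y))\<bar> \<partial>lam)" by (rule integral_pushforward_density) measurable
  also have "\<dots> = l1norm f"
    unfolding l1norm_def by (rule Bochner_Integration.integral_cong) (auto simp: psi_phi)
  finally show ?thesis .
qed

lemma integral_indicator_Tphi:
  assumes "f \<in> L1" and [measurable]: "A \<in> sets lam"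
  shows "(\<integral>x. indicator A x * Tphi \<phi> f x \<partial>lam) = (\<integral>y. indicator A (\<phi> y) * f y \<partial>lam)"
proof -
  have [measurable]: "f \<in> borel_measurable lam" using assms by (simp add: L1_def)
  have "(\<integral>x. indicator A x * Tphi \<phi> f x \<partial>lam) =
      (\<integral>x. pushforward_density x * (indicator A x * f (\<psi> x)) \<partial>lam)"
    by (rule Bochner_Integration.integral_cong) (auto simp: Tphi_eq)
  also have "\<dots> = (\<integral>y. indicator A (\<phi> y) * f (\<psi> (\<phi> y)) \<partial>lam)"
    by (rule integral_pushforward_density) measurable
  also have "\<dots> = (\<integral>y. indicator A (\<phi> y) * f y \<partial>lam)"
    by (rule Bochner_Integration.integral_cong) (auto simp: psi_phi)
  finally show ?thesis .
qed

lemma aeq_Tphi: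
  assumes "aeq f h"
  shows "aeq (Tphi \<phi> f) (Tphi \<phi> h)"
proof -
  from assms obtain N where N: "{x \<in> space lam. f x \<noteq> h x} \<subseteq> N" "N \<in> null_sets lam"
    unfolding aeq_def by (metis AE_E null_setsI)
  have "{x \<in> space lam. Tphi \<phi> f x \<noteq> Tphi \<phi> h x} \<subseteq> \<psi> -` N \<inter> {0..1}"
    using N(1) psi_unit by (force simp: Tphi_eq)
  then show ?thesis unfolding aeq_def by (rule AE_I'[OF null_vimage_psi[OF N(2)]])
qed

end

lemma nonsingular_pair_id: "nonsingular_pair (\<lambda>x. x) (\<lambda>x. x)"
  by unfold_locales (auto simp: null_sets_lam_iff Int_absorb2)

lemma aeq_integrals_eqI:
  assumes "f \<in> L1" "h \<in> L1"
    and "\<And>A. A \<in> sets lam \<Longrightarrow> (\<integral>x. indicator A x * f x \<partial>lam) = (\<integral>x. indicator A x * h x \<partial>lam)"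
  shows "aeq f h"
  unfolding aeq_def using assms
  by (intro density_unique_real) (auto simp: L1_def set_lebesgue_integral_def)

lemma Tphi_comp:
  assumes \<phi>1: "nonsingular_pair \<phi>1 \<psi>1" and \<phi>2: "nonsingular_pair \<phi>2 \<psi>2"
    and \<phi>3: "nonsingular_pair \<phi>3 \<psi>3"
    and comp: "\<And>x. x \<in> {0..1} \<Longrightarrow> \<phi>3 x = \<phi>1 (\<phi>2 x)" and f: "f \<in> L1"
  shows "aeq (Tphi \<phi>3 f) (Tphi \<phi>1 (Tphi \<phi>2 f))"
proof (rule aeq_integrals_eqI)
  have f2: "Tphi \<phi>2 f \<in> L1" by (rule nonsingular_pair.Tphi_L1[OF \<phi>2 f])
  then show "Tphi \<phi>1 (Tphi \<phi>2 f) \<in> L1" by (rule nonsingular_pair.Tphi_L1[OF \<phi>1])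
  show "Tphi \<phi>3 f \<in> L1" by (rule nonsingular_pair.Tphi_L1[OF \<phi>3 f])
  fix A assume A: "A \<in> sets lam"
  define A' where "A' = \<phi>1 -` A \<inter> space lam"
  have A': "A' \<in> sets lam"
    unfolding A'_def using nonsingular_pair.measurable_phi[OF \<phi>1] A by (rule measurable_sets)
  have "(\<integral>x. indicator A x * Tphi \<phi>3 f x \<partial>lam) = (\<integral>y. indicator A (\<phi>3 y) * f y \<partial>lam)"
    by (rule nonsingular_pair.integral_indicator_Tphi[OF \<phi>3 f A])
  also have "\<dots> = (\<integral>y. indicator A' (\<phi>2 y) * f y \<partial>lam)"
    using nonsingular_pair.phi_unit[OF \<phi>2]
    by (intro Bochner_Integration.integral_cong) (auto simp: comp A'_def indicator_def)
  also have "\<dots> = (\<integral>x. indicator A' x * Tphi \<phi>2 f x \<partial>lam)"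
    by (rule nonsingular_pair.integral_indicator_Tphi[OF \<phi>2 f A', symmetric])
  also have "\<dots> = (\<integral>x. indicator A (\<phi>1 x) * Tphi \<phi>2 f x \<partial>lam)"
    by (rule Bochner_Integration.integral_cong) (auto simp: A'_def indicator_def)
  also have "\<dots> = (\<integral>x. indicator A x * Tphi \<phi>1 (Tphi \<phi>2 f) x \<partial>lam)"
    by (rule nonsingular_pair.integral_indicator_Tphi[OF \<phi>1 f2 A, symmetric])
  finally show "(\<integral>x. indicator A x * Tphi \<phi>3 f x \<partial>lam) =
      (\<integral>x. indicator A x * Tphi \<phi>1 (Tphi \<phi>2 f) x \<partial>lam)" .
qed

lemma Tphi_id:
  assumes \<phi>: "nonsingular_pair \<phi> \<psi>" and id: "\<And>x. x \<in> {0..1} \<Longrightarrow> \<phi> x = x" and f: "f \<in> L1"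
  shows "aeq (Tphi \<phi> f) f"
proof (rule aeq_integrals_eqI)
  show "Tphi \<phi> f \<in> L1" by (rule nonsingular_pair.Tphi_L1[OF \<phi> f])
  fix A assume A: "A \<in> sets lam"
  have "(\<integral>x. indicator A x * Tphi \<phi> f x \<partial>lam) = (\<integral>y. indicator A (\<phi> y) * f y \<partial>lam)"
    by (rule nonsingular_pair.integral_indicator_Tphi[OF \<phi> f A])
  also have "\<dots> = (\<integral>y. indicator A y * f y \<partial>lam)"
    by (rule Bochner_Integration.integral_cong) (auto simp: id)
  finally show "(\<integral>x. indicator A x * Tphi \<phi> f x \<partial>lam) = (\<integral>x. indicator A x * f x \<partial>lam)" .
qed (rule f)

lemma lattice_isometry_Tphi:
  assumes \<phi>: "nonsingular_pair \<phi> \<psi>"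
  shows "lattice_isometry (Tphi \<phi>)"
  unfolding lattice_isometry_def
proof (intro conjI ballI allI impI)
  interpret nonsingular_pair \<phi> \<psi> by (rule \<phi>)
  fix f assume f: "f \<in> L1"
  show "Tphi \<phi> f \<in> L1" by (rule Tphi_L1[OF f])
  show "l1norm (Tphi \<phi> f) = l1norm f" by (rule l1norm_Tphi[OF f])
  show "aeq (Tphi \<phi> (\<lambda>x. \<bar>f x\<bar>)) (\<lambda>x. \<bar>Tphi \<phi> f x\<bar>)" by (simp add: Tphi_abs aeq_refl)
  have \<psi>: "nonsingular_pair \<psi> \<phi>" by (rule nonsingular_pair_swap)
  have "aeq (Tphi (\<lambda>x. x) f) (Tphi \<phi> (Tphi \<psi> f))"
    by (rule Tphi_comp[OF \<phi> \<psi> nonsingular_pair_id]) (auto simp: phi_psi f)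
  moreover have "aeq (Tphi (\<lambda>x. x) f) f" by (rule Tphi_id[OF nonsingular_pair_id _ f]) simp
  moreover have "Tphi \<psi> f \<in> L1" by (rule nonsingular_pair.Tphi_L1[OF \<psi> f])
  ultimately show "\<exists>h\<in>L1. aeq (Tphi \<phi> h) f" by (meson aeq_sym aeq_trans)
qed (auto simp: nonsingular_pair.aeq_Tphi[OF \<phi>] Tphi_linear aeq_refl)

section \<open>Permutations of the dyadic blocks\<close>

definition block_perm :: "(nat \<Rightarrow> nat) \<Rightarrow> real \<Rightarrow> real" where
  "block_perm \<sigma> x = (if 0 \<le> x \<and> x < 1 then block_emb (\<sigma> (block_index x)) (block_pos x) else x)"

lemma block_emb_unit_open: "0 \<le> t \<Longrightarrow> t < 1 \<Longrightarrow> 0 \<le> block_emb n t \<and> block_emb n t < 1"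
  using block_emb_in_block[of t n] block_subset[of n] by auto

lemma block_perm_emb: "0 \<le> t \<Longrightarrow> t < 1 \<Longrightarrow> block_perm \<sigma> (block_emb n t) = block_emb (\<sigma> n) t"
  using block_emb_unit_open[of t n] by (simp add: block_perm_def block_index_emb block_pos_emb)

lemma block_perm_unit_open: "0 \<le> x \<Longrightarrow> x < 1 \<Longrightarrow> 0 \<le> block_perm \<sigma> x \<and> block_perm \<sigma> x < 1"
  using block_pos_bounds[of x] block_emb_unit_open by (simp add: block_perm_def)

lemma block_perm_unit: "x \<in> {0..1} \<Longrightarrow> block_perm \<sigma> x \<in> {0..1}"
  using block_perm_unit_open[of x \<sigma>] by (cases "x < 1") (auto simp: block_perm_def)

lemma block_perm_comp: "block_perm (\<lambda>n. \<sigma> (\<tau> n)) x = block_perm \<sigma> (block_perm \<tau> x)"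
  using block_pos_bounds[of x]
  by (auto simp: block_perm_def block_emb_unit_open block_index_emb block_pos_emb)

lemma block_perm_id: "block_perm (\<lambda>n. n) x = x"
  by (simp add: block_perm_def block_emb_index_pos)

lemma
  fixes f :: "real \<Rightarrow> real" and p q :: "nat \<Rightarrow> real"
  assumes unit: "\<And>x. x \<in> {0..1} \<Longrightarrow> f x \<in> {0..1}" and f1: "f 1 = 1"
    and affine: "\<And>x. 0 \<le> x \<Longrightarrow> x < 1 \<Longrightarrow> f x = p (block_index x) + q (block_index x) * x"
    and q: "\<And>n. q n \<noteq> 0"
  shows measurable_blockwise_affine: "f \<in> lam \<rightarrow>\<^sub>M lam"
    and null_vimage_blockwise_affine: "N \<in> null_sets lam \<Longrightarrow> f -` N \<inter> {0..1} \<in> null_sets lam"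
proof -
  have vimage: "f -` A \<inter> {0..1} = ({1} \<inter> A) \<union> (\<Union>n. block n \<inter> (\<lambda>x. p n + q n * x) -` A)" for A
  proof (rule Set.set_eqI, rule iffI)
    fix x assume x: "x \<in> f -` A \<inter> {0..1}"
    show "x \<in> ({1} \<inter> A) \<union> (\<Union>n. block n \<inter> (\<lambda>x. p n + q n * x) -` A)"
    proof (cases "x = 1")
      case False
      then have "0 \<le> x" "x < 1" using x by auto
      then show ?thesis using x affine in_block_index by auto
    qed (use x f1 in auto)
  next
    fix x assume x: "x \<in> ({1} \<inter> A) \<union> (\<Union>n. block n \<inter> (\<lambda>x. p n + q n * x) -` A)"
    show "x \<in> f -` A \<inter> {0..1}"
    proof (cases "x \<in> {1} \<inter> A")
      case False
      then obtain n where n: "x \<in> block n" "p n + q n * x \<in> A" using x by blast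
      then have "x \<in> {0..<1}" using block_subset by blast
      then show ?thesis using n affine block_index_eq[OF n(1)] by auto
    qed (use f1 in auto)
  qed
  show meas: "f \<in> lam \<rightarrow>\<^sub>M lam"
  proof (rule measurableI)
    fix A assume "A \<in> sets lam"
    then have A: "A \<in> sets lebesgue" by (simp add: sets_lam_iff)
    have "(\<Union>n. block n \<inter> (\<lambda>x. p n + q n * x) -` A) \<in> sets lebesgue"
      using measurable_sets[OF lebesgue_measurable_affine[OF q] A]
      by (intro sets.countable_UN) (auto simp: block_def)
    moreover have "{1} \<inter> A \<in> sets lebesgue" using A by auto
    ultimately have "f -` A \<inter> {0..1} \<in> sets lebesgue" unfolding vimage by auto
    then show "f -` A \<inter> space lam \<in> sets lam" by (simp add: sets_lam_iff)
  qed (use unit in simp)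
  assume N: "N \<in> null_sets lam"
  then have "(\<Union>n. (\<lambda>x. p n + q n * x) -` N) \<in> null_sets lebesgue"
    using affine_vimage_null_sets_lebesgue[OF q] by (intro null_sets_UN) (auto simp: null_sets_lam_iff)
  then have U: "insert 1 (\<Union>n. (\<lambda>x. p n + q n * x) -` N) \<in> null_sets lebesgue" by simp
  have "f -` N \<inter> {0..1} \<in> sets lebesgue"
    using measurable_sets[OF meas, of N] N by (auto simp: sets_lam_iff)
  moreover have "f -` N \<inter> {0..1} \<subseteq> insert 1 (\<Union>n. (\<lambda>x. p n + q n * x) -` N)"
    unfolding vimage by blast
  ultimately have "f -` N \<inter> {0..1} \<in> null_sets lebesgue" by (rule null_sets_subset[OF U])
  then show "f -` N \<inter> {0..1} \<in> null_sets lam" by (simp add: null_sets_lam_iff)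
qed

lemma
  shows measurable_block_perm: "block_perm \<sigma> \<in> lam \<rightarrow>\<^sub>M lam"
    and null_vimage_block_perm: "N \<in> null_sets lam \<Longrightarrow> block_perm \<sigma> -` N \<inter> {0..1} \<in> null_sets lam"
proof -
  define q where "q n = block_len (\<sigma> n) / block_len n" for n
  define p where "p n = block_start (\<sigma> n) - q n * block_start n" for n
  have "q n \<noteq> 0" for n by (simp add: q_def)
  moreover have "block_perm \<sigma> x = p (block_index x) + q (block_index x) * x" if "0 \<le> x" "x < 1" for x
    using that by (simp add: block_perm_def block_emb_def block_pos_def p_def q_def field_simps)
  moreover note block_perm_unit
  moreover have "block_perm \<sigma> 1 = 1" by (simp add: block_perm_def)
  ultimately show "block_perm \<sigma> \<in> lam \<rightarrow>\<^sub>M lam"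
    and "N \<in> null_sets lam \<Longrightarrow> block_perm \<sigma> -` N \<inter> {0..1} \<in> null_sets lam"
    by (blast intro: measurable_blockwise_affine null_vimage_blockwise_affine)+
qed

lemma nonsingular_pair_block_perm:
  assumes "\<And>n. \<sigma> (\<tau> n) = n" "\<And>n. \<tau> (\<sigma> n) = n"
  shows "nonsingular_pair (block_perm \<sigma>) (block_perm \<tau>)"
  by unfold_locales
    (simp_all add: measurable_block_perm null_vimage_block_perm assms block_perm_id
      flip: block_perm_comp)

lemma AE_block_perm_neq:
  assumes "\<And>n. \<sigma> n \<noteq> n"
  shows "AE x in lam. block_perm \<sigma> x \<noteq> x"
  using AE_lam_neq_1 AE_space
proof eventually_elim
  case (elim x)
  then have "0 \<le> x" "x < 1" by auto
  then have "block_index (block_perm \<sigma> x) = \<sigma> (block_index x)"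
    using block_pos_bounds by (simp add: block_perm_def block_index_emb)
  then show ?case using assms by metis
qed

definition block_part :: "nat \<Rightarrow> (real \<Rightarrow> real) \<Rightarrow> real \<Rightarrow> real" where
  "block_part n f t = block_len n * f (block_emb n t)"

definition block_norm :: "(real \<Rightarrow> real) \<Rightarrow> nat \<Rightarrow> real" where
  "block_norm f n = (\<integral>x. indicator (block n) x * \<bar>f x\<bar> \<partial>lam)"

lemma sets_lam_block [measurable]: "block n \<in> sets lam"
  using block_subset[of n] by (auto simp: sets_lam_iff block_def)

lemma measurable_block_part [measurable]:
  assumes [measurable]: "f \<in> borel_measurable lam"
  shows "block_part n f \<in> borel_measurable lam"
  unfolding block_part_def[abs_def] by measurable

lemma block_part_add: "block_part n (\<lambda>x. f x + h x) t = block_part n f t + block_part n h t"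
  by (simp add: block_part_def algebra_simps)

lemma block_part_scale: "block_part n (\<lambda>x. c * f x) t = c * block_part n f t"
  by (simp add: block_part_def algebra_simps)

lemma AE_block_part_eq: "aeq f h \<Longrightarrow> AE t in lam. block_part n f t = block_part n h t"
  unfolding aeq_def block_part_def by (drule AE_block_emb[where n=n]) simp

lemma L1_block_part:
  assumes "f \<in> L1"
  shows "block_part n f \<in> L1"
proof -
  have [measurable]: "f \<in> borel_measurable lam" using assms by (simp add: L1_def)
  have "integrable lam (\<lambda>x. indicator (block_emb n ` {0..1}) x * f x)"
    using assms block_emb_image_sets[of "{0..1}" n] integrable_real_mult_indicator[of _ lam f]
    by (simp add: L1_def sets_lam_iff mult.commute)
  then have "integrable lam (\<lambda>t. indicator {0..1} t * (block_len n * f (block_emb n t)))"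
    by (simp add: integrable_block_emb_iff sets_lam_iff)
  moreover have "integrable lam (\<lambda>t. indicator {0..1} t * (block_len n * f (block_emb n t))) \<longleftrightarrow>
      integrable lam (block_part n f)"
    by (rule Bochner_Integration.integrable_cong) (auto simp: block_part_def)
  ultimately show ?thesis by (simp add: L1_def)
qed

lemma integral_abs_block_part:
  assumes "f \<in> L1"
  shows "(\<integral>t. \<bar>block_part n f t\<bar> \<partial>lam) = block_norm f n"
proof -
  have [measurable]: "f \<in> borel_measurable lam" "{0..<1::real} \<in> sets lam"
    using assms by (auto simp: L1_def sets_lam_iff)
  have "(\<integral>t. \<bar>block_part n f t\<bar> \<partial>lam) =
      (\<integral>t. indicator {0..<1} t * (block_len n * \<bar>f (block_emb n t)\<bar>) \<partial>lam)"
  proof (rule integral_cong_AE)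
    show "AE t in lam. \<bar>block_part n f t\<bar> = indicator {0..<1} t * (block_len n * \<bar>f (block_emb n t)\<bar>)"
      using AE_lam_neq_1 AE_space
      by eventually_elim (use block_len_pos[of n] in \<open>auto simp: block_part_def abs_mult\<close>)
  qed measurable
  also have "\<dots> = (\<integral>x. indicator (block_emb n ` {0..<1}) x * \<bar>f x\<bar> \<partial>lam)"
    by (rule integral_block_emb) (auto simp: sets_lam_iff)
  also have "\<dots> = block_norm f n" by (simp add: block_norm_def block_emb_image)
  finally show ?thesis .
qed

lemma nn_integral_abs_block_part:
  assumes "f \<in> L1"
  shows "(\<integral>\<^sup>+t. ennreal \<bar>block_part n f t\<bar> \<partial>lam) = ennreal (block_norm f n)"
  using assms L1_block_part[OF assms, of n]
  by (simp add: nn_integral_eq_integral integrable_abs L1_def integral_abs_block_part)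

lemma nn_integral_block_norm_le:
  assumes "f \<in> L1"
  shows "(\<integral>\<^sup>+n. ennreal (block_norm f n) \<partial>count_space UNIV) \<le> ennreal (l1norm f)"
proof -
  have [measurable]: "f \<in> borel_measurable lam" using assms by (simp add: L1_def)
  have "ennreal (block_norm f n) = (\<integral>\<^sup>+x \<in> block n. ennreal \<bar>f x\<bar> \<partial>lam)" for n
    using assms integrable_real_mult_indicator[of "block n" lam "\<lambda>x. \<bar>f x\<bar>"]
    by (simp add: block_norm_def nn_integral_set_ennreal nn_integral_eq_integral L1_def mult.commute)
  then have "(\<integral>\<^sup>+n. ennreal (block_norm f n) \<partial>count_space UNIV) =
      (\<Sum>n. \<integral>\<^sup>+x \<in> block n. ennreal \<bar>f x\<bar> \<partial>lam)"
    by (simp add: nn_integral_count_space_nat)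
  also have "\<dots> = (\<integral>\<^sup>+x \<in> (\<Union>n. block n). ennreal \<bar>f x\<bar> \<partial>lam)"
    using block_index_eq
    by (intro nn_integral_disjoint_family[symmetric]) (auto simp: disjoint_family_on_def)
  also have "\<dots> \<le> (\<integral>\<^sup>+x. ennreal \<bar>f x\<bar> \<partial>lam)"
    by (intro nn_integral_mono) (auto simp: indicator_def)
  also have "\<dots> = ennreal (l1norm f)"
    using assms unfolding l1norm_def by (intro nn_integral_eq_integral) (auto simp: L1_def)
  finally show ?thesis .
qed

lemma integral_indicator_Int_lessThan_1:
  fixes u :: "real \<Rightarrow> real"
  assumes [measurable]: "u \<in> borel_measurable lam" "A \<in> sets lam"
  shows "(\<integral>t. indicator A t * u t \<partial>lam) = (\<integral>t. indicator (A \<inter> {0..<1}) t * u t \<partial>lam)"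
proof (rule integral_cong_AE)
  have "A \<inter> {0..<1} \<in> sets lam" using assms(2) by (auto simp: sets_lam_iff)
  then show "(\<lambda>t. indicator (A \<inter> {0..<1}) t * u t) \<in> borel_measurable lam" by measurable
  show "AE t in lam. indicator A t * u t = indicator (A \<inter> {0..<1}) t * u t"
    using AE_lam_neq_1 AE_space by eventually_elim (auto simp: indicator_def)
qed simp

lemma aeq_block_part_Tphi_block_perm:
  assumes \<sigma>\<tau>: "\<And>n. \<sigma> (\<tau> n) = n" and \<tau>\<sigma>: "\<And>n. \<tau> (\<sigma> n) = n" and f: "f \<in> L1"
  shows "aeq (block_part (\<sigma> n) (Tphi (block_perm \<sigma>) f)) (block_part n f)"
proof (rule aeq_integrals_eqI)
  note \<sigma> = nonsingular_pair_block_perm[OF \<sigma>\<tau> \<tau>\<sigma>]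
  have Tf: "Tphi (block_perm \<sigma>) f \<in> L1" by (rule nonsingular_pair.Tphi_L1[OF \<sigma> f])
  have [measurable]: "f \<in> borel_measurable lam" "Tphi (block_perm \<sigma>) f \<in> borel_measurable lam"
    using f Tf by (simp_all add: L1_def)
  show "block_part (\<sigma> n) (Tphi (block_perm \<sigma>) f) \<in> L1" "block_part n f \<in> L1"
    using Tf f by (simp_all add: L1_block_part)
  fix A assume A[measurable]: "A \<in> sets lam"
  \<comment> \<open>The null set \<open>{1}\<close> is cut off: there \<open>block_perm\<close> does not map blocks onto blocks.\<close>
  define A' where "A' = A \<inter> {0..<1}"
  have A'[measurable]: "A' \<in> sets lam" using A by (auto simp: sets_lam_iff A'_def)
  have "block_perm \<sigma> y \<in> block_emb (\<sigma> n) ` A' \<longleftrightarrow> y \<in> block_emb n ` A'" for y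
  proof
    assume "block_perm \<sigma> y \<in> block_emb (\<sigma> n) ` A'"
    then obtain t where t: "t \<in> A'" "block_perm \<sigma> y = block_emb (\<sigma> n) t" by blast
    have "y = block_perm \<tau> (block_perm \<sigma> y)" by (simp add: \<tau>\<sigma> block_perm_id flip: block_perm_comp)
    also have "\<dots> = block_emb n t" using t by (simp add: A'_def block_perm_emb \<tau>\<sigma>)
    finally show "y \<in> block_emb n ` A'" using t(1) by blast
  qed (auto simp: A'_def block_perm_emb)
  then have perm_A': "indicator (block_emb (\<sigma> n) ` A') (block_perm \<sigma> y) =
      (indicator (block_emb n ` A') y :: real)" for y
    by (simp add: indicator_def)
  have "(\<integral>t. indicator A t * block_part (\<sigma> n) (Tphi (block_perm \<sigma>) f) t \<partial>lam) =
      (\<integral>t. indicator A' t * (block_len (\<sigma> n) * Tphi (block_perm \<sigma>) f (block_emb (\<sigma> n) t)) \<partial>lam)"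
    unfolding A'_def by (subst integral_indicator_Int_lessThan_1) (simp_all add: block_part_def)
  also have "\<dots> = (\<integral>x. indicator (block_emb (\<sigma> n) ` A') x * Tphi (block_perm \<sigma>) f x \<partial>lam)"
    by (rule integral_block_emb) simp_all
  also have "\<dots> = (\<integral>y. indicator (block_emb (\<sigma> n) ` A') (block_perm \<sigma> y) * f y \<partial>lam)"
    by (rule nonsingular_pair.integral_indicator_Tphi[OF \<sigma> f block_emb_image_sets[OF A']])
  also have "\<dots> = (\<integral>y. indicator (block_emb n ` A') y * f y \<partial>lam)"
    by (simp add: perm_A')
  also have "\<dots> = (\<integral>t. indicator A' t * (block_len n * f (block_emb n t)) \<partial>lam)"
    by (rule integral_block_emb[symmetric]) simp_all
  also have "\<dots> = (\<integral>t. indicator A t * block_part n f t \<partial>lam)"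
    unfolding A'_def by (subst (2) integral_indicator_Int_lessThan_1) (simp_all add: block_part_def)
  finally show "(\<integral>t. indicator A t * block_part (\<sigma> n) (Tphi (block_perm \<sigma>) f) t \<partial>lam) =
      (\<integral>t. indicator A t * block_part n f t \<partial>lam)" .
qed

section \<open>A strictly convex invariant renorming\<close>

lemma AE_eq_add_of_nn_integral_eq:
  fixes a b c :: "'a \<Rightarrow> ennreal"
  assumes [measurable]: "a \<in> borel_measurable M" "b \<in> borel_measurable M" "c \<in> borel_measurable M"
    and le: "\<And>x. x \<in> space M \<Longrightarrow> a x \<le> b x + c x"
    and eq: "integral\<^sup>N M a = integral\<^sup>N M b + integral\<^sup>N M c"
    and finite: "integral\<^sup>N M b + integral\<^sup>N M c \<noteq> \<infinity>"
  shows "AE x in M. a x = b x + c x"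
proof -
  define d where "d x = b x + c x - a x" for x
  have [measurable]: "d \<in> borel_measurable M" unfolding d_def[abs_def] by measurable
  have "integral\<^sup>N M a + integral\<^sup>N M d = (\<integral>\<^sup>+x. a x + d x \<partial>M)"
    by (rule nn_integral_add[symmetric]) auto
  also have "\<dots> = (\<integral>\<^sup>+x. b x + c x \<partial>M)"
    by (rule nn_integral_cong) (simp add: d_def le add_diff_inverse_ennreal)
  also have "\<dots> = integral\<^sup>N M a + 0" using eq by (simp add: nn_integral_add)
  finally have "integral\<^sup>N M d = 0" using finite eq by (simp add: ennreal_add_left_cancel)
  then have "AE x in M. d x = 0" by (simp add: nn_integral_0_iff_AE)
  then show ?thesis using AE_space
  proof eventually_elim
    case (elim x)
    then have "b x + c x \<le> a x" unfolding d_def by (simp add: ennreal_minus_eq_0)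
    then show ?case using le[OF elim(2)] by (rule antisym[rotated])
  qed
qed

lemma AE_AE_eq_add_of_nn_integral_eq:
  fixes a b c :: "'a \<Rightarrow> 'b \<Rightarrow> ennreal"
  assumes [measurable]: "\<And>x. a x \<in> borel_measurable N" "\<And>x. b x \<in> borel_measurable N"
      "\<And>x. c x \<in> borel_measurable N"
    and [measurable]: "(\<lambda>x. \<integral>\<^sup>+y. a x y \<partial>N) \<in> borel_measurable M"
    and b[measurable]: "(\<lambda>x. \<integral>\<^sup>+y. b x y \<partial>N) \<in> borel_measurable M"
    and c[measurable]: "(\<lambda>x. \<integral>\<^sup>+y. c x y \<partial>N) \<in> borel_measurable M"
    and le: "\<And>x y. a x y \<le> b x y + c x y"
    and eq: "(\<integral>\<^sup>+x. \<integral>\<^sup>+y. a x y \<partial>N \<partial>M) =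
      (\<integral>\<^sup>+x. \<integral>\<^sup>+y. b x y \<partial>N \<partial>M) + (\<integral>\<^sup>+x. \<integral>\<^sup>+y. c x y \<partial>N \<partial>M)"
    and finite: "(\<integral>\<^sup>+x. \<integral>\<^sup>+y. b x y \<partial>N \<partial>M) \<noteq> \<infinity>" "(\<integral>\<^sup>+x. \<integral>\<^sup>+y. c x y \<partial>N \<partial>M) \<noteq> \<infinity>"
  shows "AE x in M. AE y in N. a x y = b x y + c x y"
proof -
  have "(\<integral>\<^sup>+y. a x y \<partial>N) \<le> (\<integral>\<^sup>+y. b x y \<partial>N) + (\<integral>\<^sup>+y. c x y \<partial>N)" for x
    using le by (simp add: nn_integral_mono flip: nn_integral_add)
  then have "AE x in M. (\<integral>\<^sup>+y. a x y \<partial>N) = (\<integral>\<^sup>+y. b x y \<partial>N) + (\<integral>\<^sup>+y. c x y \<partial>N)"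
    using eq finite by (intro AE_eq_add_of_nn_integral_eq) auto
  moreover have "AE x in M. (\<integral>\<^sup>+y. b x y \<partial>N) \<noteq> \<infinity>" "AE x in M. (\<integral>\<^sup>+y. c x y \<partial>N) \<noteq> \<infinity>"
    using nn_integral_PInf_AE[OF b finite(1)] nn_integral_PInf_AE[OF c finite(2)] by simp_all
  ultimately show ?thesis
    by eventually_elim (intro AE_eq_add_of_nn_integral_eq; simp add: le)
qed

lemma norm_Pair_add_eq_imp_cross_eq:
  fixes a b c d :: real
  assumes "norm ((a, b) + (c, d)) = norm (a, b) + norm (c, d)"
  shows "a * d = b * c"
proof -
  define X Y where "X = norm (a, b)" and "Y = norm (c, d)"
  have "X * c = Y * a" "X * d = Y * b"
    using assms[unfolded norm_triangle_eq] by (simp_all add: X_def Y_def)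
  then have "X * (a * d - b * c) = 0" by algebra
  moreover have "X = 0 \<Longrightarrow> a = 0 \<and> b = 0" by (simp add: X_def zero_prod_def)
  ultimately show ?thesis by auto
qed

lemma nn_integral_count_space_swap:
  fixes f :: "nat \<Rightarrow> nat \<Rightarrow> ennreal"
  shows "(\<integral>\<^sup>+n. \<integral>\<^sup>+m. f n m \<partial>count_space UNIV \<partial>count_space UNIV) =
    (\<integral>\<^sup>+m. \<integral>\<^sup>+n. f n m \<partial>count_space UNIV \<partial>count_space UNIV)"
proof -
  interpret pair_sigma_finite "count_space (UNIV::nat set)" "count_space (UNIV::nat set)"
    by (intro pair_sigma_finite.intro sigma_finite_measure_count_space)
  have "case_prod f \<in> borel_measurable (count_space UNIV \<Otimes>\<^sub>M count_space UNIV)"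
    by (simp add: pair_measure_countable)
  then show ?thesis using Fubini' by simp
qed

definition block_pair_norm :: "(real \<Rightarrow> real) \<Rightarrow> nat \<Rightarrow> nat \<Rightarrow> ennreal" where
  "block_pair_norm f n m =
    (\<integral>\<^sup>+t. \<integral>\<^sup>+s. ennreal (norm (block_part n f t, block_part m f s)) \<partial>lam \<partial>lam)"

lemma measurable_block_pair_inner [measurable]:
  assumes [measurable]: "f \<in> borel_measurable lam"
  shows "(\<lambda>t. \<integral>\<^sup>+s. ennreal (norm (block_part n f t, block_part m f s)) \<partial>lam) \<in> borel_measurable lam"
proof -
  interpret finite_measure lam by (rule finite_measure_lam)
  have "case_prod (\<lambda>t s. ennreal (norm (block_part n f t, block_part m f s))) \<in>
      borel_measurable (lam \<Otimes>\<^sub>M lam)"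
    by measurable
  then show ?thesis by (rule borel_measurable_nn_integral)
qed

lemma block_pair_inner_add_le:
  assumes [measurable]: "f \<in> borel_measurable lam" "h \<in> borel_measurable lam"
  shows "(\<integral>\<^sup>+s. ennreal (norm (block_part n (\<lambda>x. f x + h x) t, block_part m (\<lambda>x. f x + h x) s)) \<partial>lam)
    \<le> (\<integral>\<^sup>+s. ennreal (norm (block_part n f t, block_part m f s)) \<partial>lam) +
      (\<integral>\<^sup>+s. ennreal (norm (block_part n h t, block_part m h s)) \<partial>lam)"
proof -
  have "(\<integral>\<^sup>+s. ennreal (norm (block_part n (\<lambda>x. f x + h x) t, block_part m (\<lambda>x. f x + h x) s)) \<partial>lam)
    \<le> (\<integral>\<^sup>+s. ennreal (norm (block_part n f t, block_part m f s)) +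
        ennreal (norm (block_part n h t, block_part m h s)) \<partial>lam)"
    using norm_triangle_ineq[of "(block_part n f t, block_part m f _)"
        "(block_part n h t, block_part m h _)"]
    by (intro nn_integral_mono) (simp add: block_part_add flip: ennreal_plus)
  also have "\<dots> = (\<integral>\<^sup>+s. ennreal (norm (block_part n f t, block_part m f s)) \<partial>lam) +
      (\<integral>\<^sup>+s. ennreal (norm (block_part n h t, block_part m h s)) \<partial>lam)"
    by (rule nn_integral_add) measurable
  finally show ?thesis .
qed

lemma block_pair_norm_add:
  assumes "f \<in> L1" "h \<in> L1"
  shows "block_pair_norm (\<lambda>x. f x + h x) n m \<le> block_pair_norm f n m + block_pair_norm h n m"
proof -
  have [measurable]: "f \<in> borel_measurable lam" "h \<in> borel_measurable lam"
    using assms by (simp_all add: L1_def)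
  show ?thesis
    unfolding block_pair_norm_def
    by (subst nn_integral_add[symmetric])
      (measurable, intro nn_integral_mono block_pair_inner_add_le, measurable)
qed

lemma block_pair_norm_le:
  assumes "f \<in> L1"
  shows "block_pair_norm f n m \<le> ennreal (block_norm f n) + ennreal (block_norm f m)"
proof -
  have [measurable]: "f \<in> borel_measurable lam" using assms by (simp add: L1_def)
  have "block_pair_norm f n m \<le>
      (\<integral>\<^sup>+t. \<integral>\<^sup>+s. ennreal \<bar>block_part n f t\<bar> + ennreal \<bar>block_part m f s\<bar> \<partial>lam \<partial>lam)"
    unfolding block_pair_norm_def
    using norm_Pair_le[of "block_part n f _" "block_part m f _"]
    by (intro nn_integral_mono) (simp flip: ennreal_plus)
  also have "\<dots> = (\<integral>\<^sup>+t. ennreal \<bar>block_part n f t\<bar> + ennreal (block_norm f m) \<partial>lam)"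
    using nn_integral_abs_block_part[OF assms]
    by (intro nn_integral_cong) (simp add: nn_integral_add emeasure_restrict_space)
  also have "\<dots> = ennreal (block_norm f n) + ennreal (block_norm f m)"
    using nn_integral_abs_block_part[OF assms] by (simp add: nn_integral_add emeasure_restrict_space)
  finally show ?thesis .
qed

lemma block_pair_norm_finite: "f \<in> L1 \<Longrightarrow> block_pair_norm f n m \<noteq> \<infinity>"
  using block_pair_norm_le[of f n m] by (auto simp: top_unique)

lemma nn_integral_norm_Pair_cong_AE:
  assumes "AE t in M. a t = a' t" "AE s in N. b s = b' s"
  shows "(\<integral>\<^sup>+t. \<integral>\<^sup>+s. ennreal (norm (a t, b s)) \<partial>N \<partial>M) =
    (\<integral>\<^sup>+t. \<integral>\<^sup>+s. ennreal (norm (a' t, b' s)) \<partial>N \<partial>M)"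
  using assms(1)
proof (intro nn_integral_cong_AE, eventually_elim)
  case (elim t)
  show ?case using assms(2) by (intro nn_integral_cong_AE, eventually_elim) (simp add: elim)
qed

lemma block_pair_norm_aeq: "aeq f h \<Longrightarrow> block_pair_norm f n m = block_pair_norm h n m"
  unfolding block_pair_norm_def by (intro nn_integral_norm_Pair_cong_AE AE_block_part_eq)

lemma block_pair_norm_Tphi_block_perm:
  assumes "\<And>n. \<sigma> (\<tau> n) = n" "\<And>n. \<tau> (\<sigma> n) = n" "f \<in> L1"
  shows "block_pair_norm (Tphi (block_perm \<sigma>) f) (\<sigma> n) (\<sigma> m) = block_pair_norm f n m"
  unfolding block_pair_norm_def
  using aeq_block_part_Tphi_block_perm[OF assms]
  by (intro nn_integral_norm_Pair_cong_AE) (simp_all add: aeq_def)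

lemma block_pair_norm_scale:
  assumes "f \<in> L1"
  shows "block_pair_norm (\<lambda>x. c * f x) n m = ennreal \<bar>c\<bar> * block_pair_norm f n m"
proof -
  have [measurable]: "f \<in> borel_measurable lam" using assms by (simp add: L1_def)
  have "ennreal (norm (block_part n (\<lambda>x. c * f x) t, block_part m (\<lambda>x. c * f x) s)) =
      ennreal \<bar>c\<bar> * ennreal (norm (block_part n f t, block_part m f s))" for t s
    using norm_scaleR[of c "(block_part n f t, block_part m f s)"]
    by (simp add: block_part_scale ennreal_mult)
  then show ?thesis
    unfolding block_pair_norm_def by (simp add: nn_integral_cmult)
qed

lemma block_pair_norm_add_eq_imp:
  assumes f: "f \<in> L1" and h: "h \<in> L1"
    and eq: "block_pair_norm (\<lambda>x. f x + h x) n m = block_pair_norm f n m + block_pair_norm h n m"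
  shows "AE t in lam. AE s in lam.
    block_part n f t * block_part m h s = block_part m f s * block_part n h t"
proof -
  have [measurable]: "f \<in> borel_measurable lam" "h \<in> borel_measurable lam"
    using f h by (simp_all add: L1_def)
  let ?a = "\<lambda>t s. ennreal (norm (block_part n (\<lambda>x. f x + h x) t, block_part m (\<lambda>x. f x + h x) s))"
  let ?b = "\<lambda>t s. ennreal (norm (block_part n f t, block_part m f s))"
  let ?c = "\<lambda>t s. ennreal (norm (block_part n h t, block_part m h s))"
  have "AE t in lam. AE s in lam. ?a t s = ?b t s + ?c t s"
  proof (rule AE_AE_eq_add_of_nn_integral_eq)
    show "?a t s \<le> ?b t s + ?c t s" for t s
      using norm_triangle_ineq[of "(block_part n f t, block_part m f s)"
          "(block_part n h t, block_part m h s)"]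
      by (simp add: block_part_add flip: ennreal_plus)
    show "(\<integral>\<^sup>+t. \<integral>\<^sup>+s. ?a t s \<partial>lam \<partial>lam) =
        (\<integral>\<^sup>+t. \<integral>\<^sup>+s. ?b t s \<partial>lam \<partial>lam) + (\<integral>\<^sup>+t. \<integral>\<^sup>+s. ?c t s \<partial>lam \<partial>lam)"
      using eq by (simp add: block_pair_norm_def)
    show "(\<integral>\<^sup>+t. \<integral>\<^sup>+s. ?b t s \<partial>lam \<partial>lam) \<noteq> \<infinity>" "(\<integral>\<^sup>+t. \<integral>\<^sup>+s. ?c t s \<partial>lam \<partial>lam) \<noteq> \<infinity>"
      using block_pair_norm_finite[OF f] block_pair_norm_finite[OF h]
      by (simp_all add: block_pair_norm_def)
  qed measurable
  then show ?thesis
  proof eventually_elim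
    case (elim t)
    then show ?case
    proof eventually_elim
      case (elim s)
      then show ?case
        by (intro norm_Pair_add_eq_imp_cross_eq) (simp add: block_part_add flip: ennreal_plus)
    qed
  qed
qed

lemma aeq_scale_of_block_part_cross_eq:
  assumes cross: "\<And>n m. AE t in lam. AE s in lam.
      block_part n f t * block_part m h s = block_part m f s * block_part n h t"
    and nonzero: "\<not> aeq f (\<lambda>_. 0)"
  shows "\<exists>c. aeq h (\<lambda>x. c * f x)"
proof -
  have "\<exists>n0. \<not> (AE t in lam. block_part n0 f t = 0)"
  proof (rule ccontr)
    assume "\<nexists>n0. \<not> (AE t in lam. block_part n0 f t = 0)"
    then have "AE t in lam. f (block_emb n t) = 0" for n
      by (auto simp: block_part_def)
    then have "AE x in lam. f x = 0" by (rule AE_lam_blocks)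
    then show False using nonzero by (simp add: aeq_def)
  qed
  then obtain n0 where n0: "\<not> (AE t in lam. block_part n0 f t = 0)" by blast
  have AE_cross: "AE t in lam. \<forall>m. AE s in lam.
      block_part n0 f t * block_part m h s = block_part m f s * block_part n0 h t"
    using cross by (simp add: AE_all_countable)
  have "\<exists>t0. block_part n0 f t0 \<noteq> 0 \<and>
      (\<forall>m. AE s in lam. block_part n0 f t0 * block_part m h s = block_part m f s * block_part n0 h t0)"
  proof (rule ccontr)
    assume none: "\<nexists>t0. block_part n0 f t0 \<noteq> 0 \<and>
      (\<forall>m. AE s in lam. block_part n0 f t0 * block_part m h s = block_part m f s * block_part n0 h t0)"
    from AE_cross have "AE t in lam. block_part n0 f t = 0"
      by eventually_elim (use none in blast)
    with n0 show False by blast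
  qed
  then obtain t0 where t0: "block_part n0 f t0 \<noteq> 0"
    "\<And>m. AE s in lam. block_part n0 f t0 * block_part m h s = block_part m f s * block_part n0 h t0"
    by blast
  define c where "c = block_part n0 h t0 / block_part n0 f t0"
  have "AE s in lam. h (block_emb m s) = c * f (block_emb m s)" for m
    using t0(2)[of m]
  proof eventually_elim
    case (elim s)
    then have "block_part m h s = c * block_part m f s" using t0(1) by (simp add: c_def field_simps)
    then show ?case using block_len_pos[of m] by (simp add: block_part_def)
  qed
  then have "AE x in lam. h x = c * f x" by (rule AE_lam_blocks)
  then show ?thesis by (auto simp: aeq_def)
qed

definition weighted_pair_sum :: "(nat \<Rightarrow> nat \<Rightarrow> real) \<Rightarrow> (real \<Rightarrow> real) \<Rightarrow> ennreal" where
  "weighted_pair_sum w f =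
    (\<integral>\<^sup>+n. \<integral>\<^sup>+m. ennreal (w n m) * block_pair_norm f n m \<partial>count_space UNIV \<partial>count_space UNIV)"

definition renorm :: "(nat \<Rightarrow> nat \<Rightarrow> real) \<Rightarrow> (real \<Rightarrow> real) \<Rightarrow> real" where
  "renorm w f = l1norm f + enn2real (weighted_pair_sum w f)"

lemma weighted_pair_sum_aeq: "aeq f h \<Longrightarrow> weighted_pair_sum w f = weighted_pair_sum w h"
  by (simp add: weighted_pair_sum_def block_pair_norm_aeq)

lemma weighted_pair_sum_scale:
  assumes "f \<in> L1"
  shows "weighted_pair_sum w (\<lambda>x. c * f x) = ennreal \<bar>c\<bar> * weighted_pair_sum w f"
proof -
  have "weighted_pair_sum w (\<lambda>x. c * f x) = (\<integral>\<^sup>+n. \<integral>\<^sup>+m.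
      ennreal \<bar>c\<bar> * (ennreal (w n m) * block_pair_norm f n m) \<partial>count_space UNIV \<partial>count_space UNIV)"
    by (simp add: weighted_pair_sum_def block_pair_norm_scale[OF assms] ac_simps)
  also have "\<dots> = ennreal \<bar>c\<bar> * weighted_pair_sum w f"
    by (simp add: weighted_pair_sum_def nn_integral_cmult)
  finally show ?thesis .
qed

lemma weighted_pair_sum_add:
  assumes "f \<in> L1" "h \<in> L1"
  shows "weighted_pair_sum w (\<lambda>x. f x + h x) \<le> weighted_pair_sum w f + weighted_pair_sum w h"
proof -
  have "weighted_pair_sum w (\<lambda>x. f x + h x) \<le> (\<integral>\<^sup>+n. \<integral>\<^sup>+m.
      ennreal (w n m) * block_pair_norm f n m + ennreal (w n m) * block_pair_norm h n m
      \<partial>count_space UNIV \<partial>count_space UNIV)"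
    unfolding weighted_pair_sum_def using block_pair_norm_add[OF assms]
    by (intro nn_integral_mono) (simp add: mult_left_mono flip: distrib_left)
  also have "\<dots> = weighted_pair_sum w f + weighted_pair_sum w h"
    by (simp add: weighted_pair_sum_def nn_integral_add)
  finally show ?thesis .
qed

lemma weighted_pair_sum_Tphi_block_perm:
  assumes \<sigma>\<tau>: "\<And>n. \<sigma> (\<tau> n) = n" and \<tau>\<sigma>: "\<And>n. \<tau> (\<sigma> n) = n" and f: "f \<in> L1"
    and invariant: "\<And>n m. w (\<sigma> n) (\<sigma> m) = w n m"
  shows "weighted_pair_sum w (Tphi (block_perm \<sigma>) f) = weighted_pair_sum w f"
proof -
  have bij: "bij_betw \<sigma> UNIV UNIV"
    by (rule bij_betw_byWitness[where f'=\<tau>]) (auto simp: \<sigma>\<tau> \<tau>\<sigma>)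
  let ?T = "Tphi (block_perm \<sigma>) f"
  have "weighted_pair_sum w ?T = (\<integral>\<^sup>+n. \<integral>\<^sup>+m.
      ennreal (w (\<sigma> n) (\<sigma> m)) * block_pair_norm ?T (\<sigma> n) (\<sigma> m) \<partial>count_space UNIV \<partial>count_space UNIV)"
    unfolding weighted_pair_sum_def
    by (subst nn_integral_bij_count_space[OF bij, symmetric])
      (intro nn_integral_cong nn_integral_bij_count_space[OF bij, symmetric])
  also have "\<dots> = weighted_pair_sum w f"
    by (simp add: weighted_pair_sum_def invariant block_pair_norm_Tphi_block_perm[OF \<sigma>\<tau> \<tau>\<sigma> f])
  finally show ?thesis .
qed

lemma renorm_ge_l1norm: "l1norm f \<le> renorm w f"
  by (simp add: renorm_def)

lemma renorm_nonneg: "0 \<le> renorm w f"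
  using renorm_ge_l1norm[of f w] l1norm_nonneg[of f] by linarith

lemma renorm_aeq: "f \<in> L1 \<Longrightarrow> h \<in> L1 \<Longrightarrow> aeq f h \<Longrightarrow> renorm w f = renorm w h"
  by (simp add: renorm_def l1norm_aeq weighted_pair_sum_aeq)

lemma renorm_scale: "f \<in> L1 \<Longrightarrow> renorm w (\<lambda>x. c * f x) = \<bar>c\<bar> * renorm w f"
  by (simp add: renorm_def weighted_pair_sum_scale l1norm_scale enn2real_mult distrib_left)

lemma renorm_Tphi_block_perm:
  assumes "\<And>n. \<sigma> (\<tau> n) = n" "\<And>n. \<tau> (\<sigma> n) = n" "f \<in> L1" "\<And>n m. w (\<sigma> n) (\<sigma> m) = w n m"
  shows "renorm w (Tphi (block_perm \<sigma>) f) = renorm w f"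
  using nonsingular_pair.l1norm_Tphi[OF nonsingular_pair_block_perm[OF assms(1,2)] assms(3)]
  by (simp add: renorm_def weighted_pair_sum_Tphi_block_perm[where \<sigma>=\<sigma> and \<tau>=\<tau> and w=w, OF assms])

locale pair_weight =
  fixes w :: "nat \<Rightarrow> nat \<Rightarrow> real" and C :: real
  assumes weight_pos: "0 < w n m"
    and row_sum_le: "(\<integral>\<^sup>+m. ennreal (w n m) \<partial>count_space UNIV) \<le> ennreal C"
    and col_sum_le: "(\<integral>\<^sup>+n. ennreal (w n m) \<partial>count_space UNIV) \<le> ennreal C"
begin

lemma bound_pos: "0 < C"
proof -
  have "ennreal (w 0 0) \<le> (\<integral>\<^sup>+m. ennreal (w 0 m) \<partial>count_space UNIV)"
    by (rule nn_integral_ge_point) simp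
  then show ?thesis using row_sum_le[of 0] weight_pos[of 0 0]
    by (metis ennreal_le_iff2 ennreal_less_zero_iff not_le order_trans)
qed

lemma weighted_pair_sum_le:
  assumes "f \<in> L1"
  shows "weighted_pair_sum w f \<le> ennreal (2 * C * l1norm f)"
proof -
  let ?c = "\<lambda>n. ennreal (block_norm f n)"
  let ?\<Sigma> = "\<lambda>g. \<integral>\<^sup>+n. \<integral>\<^sup>+m. g n m \<partial>count_space UNIV \<partial>count_space UNIV"
  have "weighted_pair_sum w f \<le> ?\<Sigma> (\<lambda>n m. ennreal (w n m) * ?c n + ennreal (w n m) * ?c m)"
    unfolding weighted_pair_sum_def using block_pair_norm_le[OF assms]
    by (intro nn_integral_mono) (simp add: mult_left_mono flip: distrib_left)
  also have "\<dots> = ?\<Sigma> (\<lambda>n m. ennreal (w n m) * ?c n) + ?\<Sigma> (\<lambda>n m. ennreal (w n m) * ?c m)"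
    by (simp add: nn_integral_add)
  also have "?\<Sigma> (\<lambda>n m. ennreal (w n m) * ?c m) = ?\<Sigma> (\<lambda>m n. ennreal (w n m) * ?c m)"
    by (rule nn_integral_count_space_swap)
  also have "?\<Sigma> (\<lambda>n m. ennreal (w n m) * ?c n) \<le> ennreal C * ennreal (l1norm f)"
  proof -
    have "?\<Sigma> (\<lambda>n m. ennreal (w n m) * ?c n) \<le> (\<integral>\<^sup>+n. ennreal C * ?c n \<partial>count_space UNIV)"
      using row_sum_le by (intro nn_integral_mono) (simp add: nn_integral_multc mult_right_mono)
    also have "\<dots> \<le> ennreal C * ennreal (l1norm f)"
      using nn_integral_block_norm_le[OF assms] by (simp add: nn_integral_cmult mult_left_mono)
    finally show ?thesis .
  qed
  also have "?\<Sigma> (\<lambda>m n. ennreal (w n m) * ?c m) \<le> ennreal C * ennreal (l1norm f)"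
  proof -
    have "?\<Sigma> (\<lambda>m n. ennreal (w n m) * ?c m) \<le> (\<integral>\<^sup>+m. ennreal C * ?c m \<partial>count_space UNIV)"
      using col_sum_le by (intro nn_integral_mono) (simp add: nn_integral_multc mult_right_mono)
    also have "\<dots> \<le> ennreal C * ennreal (l1norm f)"
      using nn_integral_block_norm_le[OF assms] by (simp add: nn_integral_cmult mult_left_mono)
    finally show ?thesis .
  qed
  also have "ennreal C * ennreal (l1norm f) + ennreal C * ennreal (l1norm f) = ennreal (2 * C * l1norm f)"
    using bound_pos l1norm_nonneg[of f] by (simp add: ennreal_mult[symmetric] ennreal_plus[symmetric])
  finally show ?thesis by (simp add: add_mono)
qed

lemma weighted_pair_sum_finite: "f \<in> L1 \<Longrightarrow> weighted_pair_sum w f \<noteq> \<infinity>"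
  using weighted_pair_sum_le[of f] by (auto simp: top_unique)

lemma enn2real_weighted_pair_sum_add:
  assumes "f \<in> L1" "h \<in> L1"
  shows "enn2real (weighted_pair_sum w (\<lambda>x. f x + h x)) \<le>
    enn2real (weighted_pair_sum w f) + enn2real (weighted_pair_sum w h)"
proof -
  have "enn2real (weighted_pair_sum w (\<lambda>x. f x + h x)) \<le>
      enn2real (weighted_pair_sum w f + weighted_pair_sum w h)"
    using weighted_pair_sum_add[OF assms] weighted_pair_sum_finite[OF assms(1)]
      weighted_pair_sum_finite[OF assms(2)]
    by (intro enn2real_mono) (simp_all add: less_top)
  also have "\<dots> = enn2real (weighted_pair_sum w f) + enn2real (weighted_pair_sum w h)"
    using weighted_pair_sum_finite[OF assms(1)] weighted_pair_sum_finite[OF assms(2)]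
    by (intro enn2real_plus) (simp_all add: less_top)
  finally show ?thesis .
qed

lemma renorm_le: "f \<in> L1 \<Longrightarrow> renorm w f \<le> (1 + 2 * C) * l1norm f"
  using weighted_pair_sum_le[of f] bound_pos l1norm_nonneg[of f]
  by (simp add: renorm_def enn2real_leI algebra_simps)

lemma renorm_add:
  assumes "f \<in> L1" "h \<in> L1"
  shows "renorm w (\<lambda>x. f x + h x) \<le> renorm w f + renorm w h"
  using l1norm_add[OF assms] enn2real_weighted_pair_sum_add[OF assms] by (simp add: renorm_def)

lemma renorm_eq_0_iff:
  assumes "f \<in> L1"
  shows "renorm w f = 0 \<longleftrightarrow> aeq f (\<lambda>_. 0)"
proof -
  have "renorm w f = 0 \<longleftrightarrow> l1norm f = 0"
  proof
    show "renorm w f = 0 \<Longrightarrow> l1norm f = 0"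
      using renorm_ge_l1norm[of f w] l1norm_nonneg[of f] by linarith
    show "l1norm f = 0 \<Longrightarrow> renorm w f = 0"
      using renorm_le[OF assms] renorm_nonneg[of w f] by simp
  qed
  then show ?thesis using l1norm_eq_0_iff[OF assms] by simp
qed

lemma equiv_norm_renorm: "equiv_norm (renorm w)"
  unfolding equiv_norm_def
proof (intro conjI ballI allI impI)
  show "\<exists>a b. 0 < a \<and> 0 < b \<and> (\<forall>f\<in>L1. a * l1norm f \<le> renorm w f \<and> renorm w f \<le> b * l1norm f)"
    using bound_pos by (intro exI[of _ 1] exI[of _ "1 + 2 * C"]) (simp add: renorm_ge_l1norm renorm_le)
qed (simp_all add: renorm_aeq renorm_nonneg renorm_eq_0_iff renorm_scale renorm_add)

lemma block_pair_norm_add_eq_of_weighted_pair_sum_add_eq: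
  assumes f: "f \<in> L1" and h: "h \<in> L1"
    and eq: "weighted_pair_sum w (\<lambda>x. f x + h x) = weighted_pair_sum w f + weighted_pair_sum w h"
  shows "block_pair_norm (\<lambda>x. f x + h x) n m = block_pair_norm f n m + block_pair_norm h n m"
proof -
  have "AE n in count_space UNIV. AE m in count_space UNIV.
      ennreal (w n m) * block_pair_norm (\<lambda>x. f x + h x) n m =
      ennreal (w n m) * block_pair_norm f n m + ennreal (w n m) * block_pair_norm h n m"
    using eq weighted_pair_sum_finite[OF f] weighted_pair_sum_finite[OF h] block_pair_norm_add[OF f h]
    by (intro AE_AE_eq_add_of_nn_integral_eq)
      (simp_all add: weighted_pair_sum_def mult_left_mono flip: distrib_left)
  then have "ennreal (w n m) * block_pair_norm (\<lambda>x. f x + h x) n m =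
      ennreal (w n m) * (block_pair_norm f n m + block_pair_norm h n m)"
    by (simp add: AE_count_space distrib_left)
  then show ?thesis using weight_pos[of n m] by (simp add: ennreal_mult_cancel_left)
qed

lemma weighted_pair_sum_add_eq_of_renorm_add_eq:
  assumes f: "f \<in> L1" and h: "h \<in> L1"
    and eq: "renorm w (\<lambda>x. f x + h x) = renorm w f + renorm w h"
  shows "weighted_pair_sum w (\<lambda>x. f x + h x) = weighted_pair_sum w f + weighted_pair_sum w h"
proof -
  have "enn2real (weighted_pair_sum w (\<lambda>x. f x + h x)) =
      enn2real (weighted_pair_sum w f) + enn2real (weighted_pair_sum w h)"
    using eq l1norm_add[OF f h] enn2real_weighted_pair_sum_add[OF f h] unfolding renorm_def by linarith
  then have "ennreal (enn2real (weighted_pair_sum w (\<lambda>x. f x + h x))) =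
      ennreal (enn2real (weighted_pair_sum w f)) + ennreal (enn2real (weighted_pair_sum w h))"
    by (simp add: ennreal_plus)
  then show ?thesis
    using weighted_pair_sum_finite[OF f] weighted_pair_sum_finite[OF h]
      weighted_pair_sum_finite[OF L1_add[OF f h]]
    by (simp add: ennreal_enn2real_if)
qed

lemma strictly_convex_renorm: "strictly_convex_norm (renorm w)"
  unfolding strictly_convex_norm_def
proof (intro ballI impI, elim conjE)
  fix f h assume f: "f \<in> L1" and h: "h \<in> L1" and ne: "\<not> aeq f h" and eqN: "renorm w f = renorm w h"
  let ?u = "\<lambda>x. f x + h x"
  have u: "?u \<in> L1" by (rule L1_add[OF f h])
  have mid: "renorm w (\<lambda>x. (f x + h x) / 2) = renorm w ?u / 2"
    using renorm_scale[OF u, where c="1/2"] by (simp add: field_simps)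
  have "\<not> aeq f (\<lambda>_. 0)"
  proof
    assume "aeq f (\<lambda>_. 0)"
    moreover from this have "aeq h (\<lambda>_. 0)" using eqN renorm_eq_0_iff[OF f] renorm_eq_0_iff[OF h] by simp
    ultimately show False using ne aeq_sym aeq_trans by blast
  qed
  then have pos: "0 < renorm w f" using renorm_eq_0_iff[OF f] renorm_nonneg[of w f] by force
  show "renorm w (\<lambda>x. (f x + h x) / 2) < renorm w f"
  proof (cases "renorm w ?u < renorm w f + renorm w h")
    case True then show ?thesis using mid eqN by simp
  next
    case False
    then have "renorm w ?u = renorm w f + renorm w h" using renorm_add[OF f h] by simp
    then have "weighted_pair_sum w ?u = weighted_pair_sum w f + weighted_pair_sum w h"
      by (rule weighted_pair_sum_add_eq_of_renorm_add_eq[OF f h])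
    then have "\<And>n m. AE t in lam. AE s in lam.
        block_part n f t * block_part m h s = block_part m f s * block_part n h t"
      by (intro block_pair_norm_add_eq_imp[OF f h]
          block_pair_norm_add_eq_of_weighted_pair_sum_add_eq[OF f h])
    with \<open>\<not> aeq f (\<lambda>_. 0)\<close> obtain c where c: "aeq h (\<lambda>x. c * f x)"
      using aeq_scale_of_block_part_cross_eq by blast
    then have "renorm w h = \<bar>c\<bar> * renorm w f"
      using renorm_aeq[OF h L1_scale[OF f] c] renorm_scale[OF f] by simp
    then have "c = 1 \<or> c = -1" using eqN pos by (simp add: abs_if split: if_splits)
    then show ?thesis
    proof
      assume "c = 1"
      then show ?thesis using c ne by (simp add: aeq_sym)
    next
      assume "c = -1"
      then have "aeq ?u (\<lambda>_. 0)" using c unfolding aeq_def by (auto elim: AE_mp)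
      then show ?thesis using mid pos renorm_eq_0_iff[OF u] by simp
    qed
  qed
qed

end

section \<open>Countable groups acting on the blocks\<close>

lemma nn_integral_half_power_inj_le:
  fixes h :: "nat \<Rightarrow> nat"
  assumes "inj h"
  shows "(\<integral>\<^sup>+m. ennreal ((1/2)^(h m)) \<partial>count_space UNIV) \<le> 2"
proof -
  have "bij_betw h UNIV (range h)" using assms by (simp add: bij_betw_def)
  then have "(\<integral>\<^sup>+m. ennreal ((1/2)^(h m)) \<partial>count_space UNIV) =
      (\<integral>\<^sup>+i. ennreal ((1/2)^i) \<partial>count_space (range h))"
    by (rule nn_integral_bij_count_space)
  also have "\<dots> = (\<integral>\<^sup>+i. ennreal ((1/2)^i) * indicator (range h) i \<partial>count_space UNIV)"
    by (rule nn_integral_count_space_indicator) simp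
  also have "\<dots> \<le> (\<integral>\<^sup>+i. ennreal ((1/2)^i) \<partial>count_space UNIV)"
    by (rule nn_integral_mono) (auto simp: indicator_def)
  also have "\<dots> = ennreal (\<Sum>i. (1/2::real)^i)"
    by (simp add: nn_integral_count_space_nat suminf_ennreal2 summable_geometric)
  also have "(\<Sum>i. (1/2::real)^i) = 2" using suminf_geometric[of "1/2::real"] by simp
  finally show ?thesis by simp
qed

lemma (in group) inv_mult_cancel_left:
  assumes "g \<in> carrier G" "a \<in> carrier G" "b \<in> carrier G"
  shows "inv (g \<otimes> a) \<otimes> (g \<otimes> b) = inv a \<otimes> b"
  using assms by (simp add: inv_mult_group m_assoc flip: m_assoc[of "inv g" g b])

locale countable_group = group +
  assumes countable_carrier: "countable (carrier G)"
begin

definition slot :: "nat \<Rightarrow> 'a \<times> nat" where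
  "slot = from_nat_into (carrier G \<times> UNIV)"

definition slot_perm :: "'a \<Rightarrow> nat \<Rightarrow> nat" where
  "slot_perm g n = to_nat_on (carrier G \<times> UNIV) (g \<otimes> fst (slot n), snd (slot n))"

lemma carrier_not_empty: "carrier G \<noteq> {}"
  using one_closed by blast

lemma countable_slots: "countable (carrier G \<times> (UNIV :: nat set))"
  using countable_carrier by simp

lemma slot_in: "slot n \<in> carrier G \<times> UNIV"
  unfolding slot_def by (rule from_nat_into) (simp add: carrier_not_empty)

lemma to_nat_on_slot [simp]: "to_nat_on (carrier G \<times> UNIV) (slot n) = n"
proof -
  have "infinite (carrier G \<times> (UNIV :: nat set))"
    by (simp add: finite_cartesian_product_iff carrier_not_empty)
  then show ?thesis unfolding slot_def using countable_slots by simp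
qed

lemma slot_to_nat_on [simp]: "p \<in> carrier G \<times> UNIV \<Longrightarrow> slot (to_nat_on (carrier G \<times> UNIV) p) = p"
  unfolding slot_def using countable_slots by simp

lemma slot_inj: "slot n = slot m \<Longrightarrow> n = m"
  by (metis to_nat_on_slot)

lemma slot_slot_perm: "g \<in> carrier G \<Longrightarrow> slot (slot_perm g n) = (g \<otimes> fst (slot n), snd (slot n))"
  using slot_in[of n] by (auto simp: slot_perm_def)

lemma slot_perm_mult:
  "g \<in> carrier G \<Longrightarrow> h \<in> carrier G \<Longrightarrow> slot_perm (g \<otimes> h) n = slot_perm g (slot_perm h n)"
  using slot_in[of n] by (auto simp: slot_perm_def slot_slot_perm m_assoc)

lemma slot_perm_one: "slot_perm \<one> = (\<lambda>n. n)"
  using slot_in by (simp add: fun_eq_iff slot_perm_def mem_Times_iff)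

lemma slot_perm_inv_slot_perm: "g \<in> carrier G \<Longrightarrow> slot_perm (inv g) (slot_perm g n) = n"
  by (simp flip: slot_perm_mult add: slot_perm_one)

lemma slot_perm_slot_perm_inv: "g \<in> carrier G \<Longrightarrow> slot_perm g (slot_perm (inv g) n) = n"
  by (simp flip: slot_perm_mult add: slot_perm_one)

lemma slot_perm_neq:
  assumes "g \<in> carrier G" "g \<noteq> \<one>"
  shows "slot_perm g n \<noteq> n"
proof
  assume "slot_perm g n = n"
  then have "g \<otimes> fst (slot n) = fst (slot n)" using slot_slot_perm[OF assms(1), of n] by (metis fst_conv)
  then show False using assms slot_in[of n] by (auto simp: r_cancel_one)
qed

\<comment> \<open>A complete invariant of the orbit of \<open>(n, m)\<close> under the diagonal action of \<open>G\<close>.\<close>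
definition orbit_key :: "nat \<Rightarrow> nat \<Rightarrow> 'a \<times> nat \<times> nat" where
  "orbit_key n m = (inv (fst (slot n)) \<otimes> fst (slot m), snd (slot n), snd (slot m))"

definition orbit_weight :: "nat \<Rightarrow> nat \<Rightarrow> real" where
  "orbit_weight n m = (1/2) ^ to_nat_on (carrier G \<times> UNIV \<times> UNIV) (orbit_key n m)"

lemma orbit_key_in: "orbit_key n m \<in> carrier G \<times> UNIV \<times> UNIV"
  using slot_in[of n] slot_in[of m] by (auto simp: orbit_key_def)

lemma orbit_key_slot_perm: "g \<in> carrier G \<Longrightarrow> orbit_key (slot_perm g n) (slot_perm g m) = orbit_key n m"
  using slot_in[of n] slot_in[of m] by (auto simp: orbit_key_def slot_slot_perm inv_mult_cancel_left)

lemma inj_orbit_key_row: "inj (orbit_key n)"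
proof (rule injI)
  fix m m' assume "orbit_key n m = orbit_key n m'"
  then have "slot m = slot m'"
    using slot_in[of n] slot_in[of m] slot_in[of m'] by (auto simp: orbit_key_def prod_eq_iff)
  then show "m = m'" by (rule slot_inj)
qed

lemma inj_orbit_key_col: "inj (\<lambda>n. orbit_key n m)"
proof (rule injI)
  fix n n' assume "orbit_key n m = orbit_key n' m"
  then have "inv (fst (slot n)) = inv (fst (slot n'))" "snd (slot n) = snd (slot n')"
    using slot_in[of m] slot_in[of n] slot_in[of n'] by (auto simp: orbit_key_def mem_Times_iff)
  then have "slot n = slot n'"
    using slot_in[of n] slot_in[of n'] by (metis inv_inv mem_Times_iff prod_eq_iff)
  then show "n = n'" by (rule slot_inj)
qed

lemma pair_weight_orbit_weight: "pair_weight orbit_weight 2"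
proof
  have "inj_on (to_nat_on (carrier G \<times> UNIV \<times> UNIV))
      (carrier G \<times> (UNIV :: nat set) \<times> (UNIV :: nat set))"
    using countable_carrier by (intro inj_on_to_nat_on) simp
  then have inj: "inj (\<lambda>x. to_nat_on (carrier G \<times> UNIV \<times> UNIV) (k x))"
    if "inj k" "range k \<subseteq> carrier G \<times> UNIV \<times> UNIV" for k :: "nat \<Rightarrow> 'a \<times> nat \<times> nat"
    using comp_inj_on[OF that(1)] inj_on_subset that(2) by (auto simp: o_def)
  show "(\<integral>\<^sup>+m. ennreal (orbit_weight n m) \<partial>count_space UNIV) \<le> ennreal 2" for n
    unfolding orbit_weight_def using inj[OF inj_orbit_key_row[of n]] orbit_key_in
    by (simp add: nn_integral_half_power_inj_le image_subset_iff)
  show "(\<integral>\<^sup>+n. ennreal (orbit_weight n m) \<partial>count_space UNIV) \<le> ennreal 2" for m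
    unfolding orbit_weight_def using inj[OF inj_orbit_key_col[of m]] orbit_key_in
    by (simp add: nn_integral_half_power_inj_le image_subset_iff)
qed (simp add: orbit_weight_def)

lemma nonsingular_pair_slot_perm:
  "g \<in> carrier G \<Longrightarrow> nonsingular_pair (block_perm (slot_perm g)) (block_perm (slot_perm (inv g)))"
  by (intro nonsingular_pair_block_perm) (simp_all add: slot_perm_inv_slot_perm slot_perm_slot_perm_inv)

lemma lattice_isometric_action_slot_perm:
  "lattice_isometric_action G (\<lambda>g. Tphi (block_perm (slot_perm g)))"
  unfolding lattice_isometric_action_def
proof (intro conjI ballI)
  fix g h f assume g: "g \<in> carrier G" and h: "h \<in> carrier G" and f: "f \<in> L1"
  have mult: "slot_perm (g \<otimes> h) = (\<lambda>n. slot_perm g (slot_perm h n))"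
    by (simp add: fun_eq_iff slot_perm_mult[OF g h])
  show "aeq (Tphi (block_perm (slot_perm (g \<otimes> h))) f)
      (Tphi (block_perm (slot_perm g)) (Tphi (block_perm (slot_perm h)) f))"
    by (rule Tphi_comp[OF nonsingular_pair_slot_perm[OF g] nonsingular_pair_slot_perm[OF h]
          nonsingular_pair_slot_perm[OF m_closed[OF g h]] _ f])
      (simp add: mult block_perm_comp)
next
  fix f assume "f \<in> L1"
  then show "aeq (Tphi (block_perm (slot_perm \<one>)) f) f"
    by (intro Tphi_id[OF nonsingular_pair_slot_perm[OF one_closed]])
      (simp_all add: slot_perm_one block_perm_id)
qed (rule lattice_isometry_Tphi[OF nonsingular_pair_slot_perm])

lemma free_action_slot_perm: "free_action G (\<lambda>g. Tphi (block_perm (slot_perm g)))"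
  unfolding free_action_def
  by (intro exI[of _ "\<lambda>g. block_perm (slot_perm g)"])
    (simp add: aeq_refl nonsingular_pair.nonsingular_bij_phi[OF nonsingular_pair_slot_perm]
      AE_block_perm_neq slot_perm_neq)

lemma invariant_norm_renorm_orbit_weight:
  "invariant_norm G (\<lambda>g. Tphi (block_perm (slot_perm g))) (renorm orbit_weight)"
  unfolding invariant_norm_def
proof (intro ballI)
  fix g f assume "g \<in> carrier G" "f \<in> L1"
  then show "renorm orbit_weight (Tphi (block_perm (slot_perm g)) f) = renorm orbit_weight f"
    by (intro renorm_Tphi_block_perm[where \<tau>="slot_perm (inv g)"])
      (simp_all add: slot_perm_inv_slot_perm slot_perm_slot_perm_inv orbit_weight_def orbit_key_slot_perm)
qed

end

theorem corollary5p3: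
  fixes G :: "('g, 'b) monoid_scheme"
  assumes "group G" and "countable (carrier G)"
  shows "\<exists>T. lattice_isometric_action G T \<and> free_action G T \<and>
            (\<exists>N. equiv_norm N \<and> strictly_convex_norm N \<and> invariant_norm G T N)"
proof -
  interpret countable_group G
    by (intro countable_group.intro countable_group_axioms.intro assms)
  interpret pair_weight orbit_weight 2
    by (rule pair_weight_orbit_weight)
  show ?thesis
    using lattice_isometric_action_slot_perm free_action_slot_perm invariant_norm_renorm_orbit_weight
      equiv_norm_renorm strictly_convex_renorm
    by blast
qed

end
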